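(* Let $(M_q,\widetilde B)$ be a quantum seed and $\mathrm{inv}\subseteq[1,N]\setminus\mathrm{ex}$. For each prime element $p\in\mathbb Z[q^{\pm1/2}]$ and each $k\in\mathrm{ex}$, $$\mathcal T_q(M_q)_\ge\cap\big(p\,\mathcal T_q(\mu_kM_q)_\ge\big)=\big(p\,\mathcal T_q(M_q)_\ge\big)\cap\mathcal T_q(\mu_kM_q)_\ge.$$
   Context: $\mathcal A^{1/2}_q=\mathbb Z[q^{\pm1/2}]$; $e_1,\dots,e_N$ standard basis of $\mathbb Z^N$. For a skew-symmetric integer matrix $\Lambda$, the based quantum torus $\mathcal T_q(\Lambda)$ is the $\mathcal A^{1/2}_q$-algebra with basis $X^f$, $f\in\mathbb Z^N$, and $X^fX^g=q^{\Lambda(f,g)/2}X^{f+g}$. A toric frame of a division algebra $\mathcal F_q$ over $\mathbb Q(q^{1/2})$ is a map $M_q:\mathbb Z^N\to\mathcal F_q$ such that for some (unique) skew-symmetric $\Lambda=:\Lambda_{M_q}\in M_N(\mathbb Z)$ there is an injective $\mathcal A^{1/2}_q$-algebra map $\mathcal T_q(\Lambda)\to\mathcal F_q$, $X^f\mapsto M_q(f)$, with $\mathcal F_q$ the skew field of fractions of its image. Fix $\mathrm{ex}\subseteq[1,N]$; $\widetilde B=(b_{ij})$ is an integer matrix with rows $[1,N]$, columns $\mathrm{ex}$, $k$-th column $b^k$. $(\Lambda,\widetilde B)$ is compatible if there are positive integers $d_j$ with $\sum_kb_{kj}\lambda_{ki}=\delta_{ij}d_j$ for all $i\in[1,N]$,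 $j\in\mathrm{ex}$; a quantum seed is $(M_q,\widetilde B)$ with $(\Lambda_{M_q},\widetilde B)$ compatible. For $k\in\mathrm{ex}$, $\mu_k(M_q)$ is the toric frame with matrix $E^\top\Lambda_{M_q}E$ ($E$: $e_{ij}=\delta_{ij}$ for $j\ne k$, $e_{kk}=-1$, $e_{ik}=\max(0,-b_{ik})$ for $i\ne k$) such that $\mu_k(M_q)(e_j)=M_q(e_j)$ for $j\ne k$ and $\mu_k(M_q)(e_k)=M_q(-e_k+[b^k]_+)+M_q(-e_k-[b^k]_-)$, where $[b]_\pm$ keeps the entries $b_i$ with $\pm b_i\ge0$ and sets the others to $0$. For a toric frame $M'_q$, $\mathcal T_q(M'_q)_\ge$ is the $\mathcal A^{1/2}_q$-subalgebra of $\mathcal F_q$ generated by $M'_q(e_i)$, $i\in[1,N]$, and $M'_q(e_j)^{-1}$, $j\in\mathrm{ex}\sqcup\mathrm{inv}$. *)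

theory Defs
  imports Main "HOL-Library.Function_Algebras"
begin

text \<open>Ambient data: a division ring 'f (the skew field F_q) together with a central
element t (playing the role of q^(1/2)) which is transcendental over Q.
Vectors of Z^N are functions nat => int supported on {1..N}.\<close>

definition laurent_ring :: "'f::division_ring \<Rightarrow> 'f set" where
  "laurent_ring t = {(\<Sum>k\<in>K. of_int (c k) * t powi k) | K c. finite K}"

definition central_transcendental :: "'f::division_ring \<Rightarrow> bool" where
  "central_transcendental t \<longleftrightarrow> t \<noteq> 0 \<and> (\<forall>x. t * x = x * t) \<and>
     (\<forall>K c. finite K \<longrightarrow> (\<Sum>k\<in>K. of_int (c k) * t powi k) = 0 \<longrightarrow> (\<forall>k\<in>K. c k = 0))"

definition A_dvd :: "'f::division_ring \<Rightarrow> 'f \<Rightarrow> 'f \<Rightarrow> bool" where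
  "A_dvd t a x \<longleftrightarrow> (\<exists>c\<in>laurent_ring t. x = a * c)"

text \<open>Prime element of the ring Z[q^(+-1/2)] (realised as laurent_ring t).\<close>
definition A_prime :: "'f::division_ring \<Rightarrow> 'f \<Rightarrow> bool" where
  "A_prime t p \<longleftrightarrow> p \<in> laurent_ring t \<and> p \<noteq> 0 \<and>
     \<not> (\<exists>u\<in>laurent_ring t. p * u = 1) \<and>
     (\<forall>a\<in>laurent_ring t. \<forall>b\<in>laurent_ring t. A_dvd t p (a * b) \<longrightarrow> A_dvd t p a \<or> A_dvd t p b)"

definition zvec :: "nat \<Rightarrow> (nat \<Rightarrow> int) set" where
  "zvec N = {f. \<forall>i. i \<notin> {1..N} \<longrightarrow> f i = 0}"

definition unitv :: "nat \<Rightarrow> nat \<Rightarrow> int" where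
  "unitv i = (\<lambda>j. if j = i then 1 else 0)"

definition bilin :: "nat \<Rightarrow> (nat \<Rightarrow> nat \<Rightarrow> int) \<Rightarrow> (nat \<Rightarrow> int) \<Rightarrow> (nat \<Rightarrow> int) \<Rightarrow> int" where
  "bilin N L f g = (\<Sum>i\<in>{1..N}. \<Sum>j\<in>{1..N}. f i * L i j * g j)"

definition skew_sym :: "nat \<Rightarrow> (nat \<Rightarrow> nat \<Rightarrow> int) \<Rightarrow> bool" where
  "skew_sym N L \<longleftrightarrow> (\<forall>i\<in>{1..N}. \<forall>j\<in>{1..N}. L i j = - L j i)"

definition sub_division_ring :: "'f::division_ring set \<Rightarrow> bool" where
  "sub_division_ring D \<longleftrightarrow> 0 \<in> D \<and> 1 \<in> D \<and> (\<forall>x\<in>D. \<forall>y\<in>D. x + y \<in> D \<and> x * y \<in> D) \<and>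
     (\<forall>x\<in>D. - x \<in> D \<and> inverse x \<in> D)"

text \<open>M is a toric frame with matrix L: the Z[q^(+-1/2)]-linear map X^f \<mapsto> M f from the
based quantum torus T_q(L) is a unital algebra map (multiplicativity on the basis),
injective (the M f are linearly independent over Z[q^(+-1/2)]), and F is the skew field
of fractions of the image (generated by it as a division ring).\<close>
definition toric_frame :: "'f::division_ring \<Rightarrow> nat \<Rightarrow> ((nat \<Rightarrow> int) \<Rightarrow> 'f) \<Rightarrow> (nat \<Rightarrow> nat \<Rightarrow> int) \<Rightarrow> bool" where
  "toric_frame t N M L \<longleftrightarrow> skew_sym N L \<and> M 0 = 1 \<and>
     (\<forall>f\<in>zvec N. \<forall>g\<in>zvec N. M f * M g = t powi (bilin N L f g) * M (f + g)) \<and>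
     (\<forall>S c. finite S \<longrightarrow> S \<subseteq> zvec N \<longrightarrow> (\<forall>f\<in>S. c f \<in> laurent_ring t) \<longrightarrow>
         (\<Sum>f\<in>S. c f * M f) = 0 \<longrightarrow> (\<forall>f\<in>S. c f = 0)) \<and>
     (\<forall>D. sub_division_ring D \<longrightarrow> t \<in> D \<longrightarrow> M ` zvec N \<subseteq> D \<longrightarrow> D = UNIV)"

definition compatible :: "nat \<Rightarrow> nat set \<Rightarrow> (nat \<Rightarrow> nat \<Rightarrow> int) \<Rightarrow> (nat \<Rightarrow> nat \<Rightarrow> int) \<Rightarrow> bool" where
  "compatible N ex L B \<longleftrightarrow> (\<exists>d::nat \<Rightarrow> int. (\<forall>j\<in>ex. d j > 0) \<and>
     (\<forall>i\<in>{1..N}. \<forall>j\<in>ex. (\<Sum>k\<in>{1..N}. B k j * L k i) = (if i = j then d j else 0)))"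

definition quantum_seed :: "'f::division_ring \<Rightarrow> nat \<Rightarrow> nat set \<Rightarrow> ((nat \<Rightarrow> int) \<Rightarrow> 'f) \<Rightarrow> (nat \<Rightarrow> nat \<Rightarrow> int) \<Rightarrow> bool" where
  "quantum_seed t N ex M B \<longleftrightarrow> (\<exists>L. toric_frame t N M L \<and> compatible N ex L B)"

definition bpos :: "nat \<Rightarrow> (nat \<Rightarrow> nat \<Rightarrow> int) \<Rightarrow> nat \<Rightarrow> nat \<Rightarrow> int" where
  "bpos N B k = (\<lambda>i. if i \<in> {1..N} then max 0 (B i k) else 0)"

definition bneg :: "nat \<Rightarrow> (nat \<Rightarrow> nat \<Rightarrow> int) \<Rightarrow> nat \<Rightarrow> nat \<Rightarrow> int" where
  "bneg N B k = (\<lambda>i. if i \<in> {1..N} then min 0 (B i k) else 0)"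

text \<open>Values of the mutated toric frame mu_k(M) on the standard basis vectors.\<close>
definition mut_basis :: "nat \<Rightarrow> ((nat \<Rightarrow> int) \<Rightarrow> 'f::division_ring) \<Rightarrow> (nat \<Rightarrow> nat \<Rightarrow> int) \<Rightarrow> nat \<Rightarrow> nat \<Rightarrow> 'f" where
  "mut_basis N M B k j = (if j = k
      then M (- unitv k + bpos N B k) + M (- unitv k - bneg N B k)
      else M (unitv j))"

text \<open>T_q(M')_\<ge>: the Z[q^(+-1/2)]-subalgebra generated by M'(e_i), i in [1,N], and
M'(e_j)^(-1), j in ex \<union> inv; here g j = M'(e_j).\<close>
inductive_set Tge :: "'f::division_ring \<Rightarrow> nat \<Rightarrow> nat set \<Rightarrow> nat set \<Rightarrow> (nat \<Rightarrow> 'f) \<Rightarrow> 'f set"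
  for t N ex inv g where
  scalar: "a \<in> laurent_ring t \<Longrightarrow> a \<in> Tge t N ex inv g"
| gen: "i \<in> {1..N} \<Longrightarrow> g i \<in> Tge t N ex inv g"
| geninv: "j \<in> ex \<union> inv \<Longrightarrow> inverse (g j) \<in> Tge t N ex inv g"
| add: "x \<in> Tge t N ex inv g \<Longrightarrow> y \<in> Tge t N ex inv g \<Longrightarrow> x + y \<in> Tge t N ex inv g"
| mult: "x \<in> Tge t N ex inv g \<Longrightarrow> y \<in> Tge t N ex inv g \<Longrightarrow> x * y \<in> Tge t N ex inv g"

definition smul_set :: "'f::division_ring \<Rightarrow> 'f set \<Rightarrow> 'f set" where
  "smul_set p S = {p * x | x. x \<in> S}"

end

(*
  Both algebras are spanned over Z[q^(+-1/2)] by quasi-commuting monomials whose exponents are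
  nonnegative outside ex \<union> inv: T_q(M)_\<ge> by the M(f), and T_q(\<mu>_k M)_\<ge> by the mutated
  monomials M(f - f_k e_k) Y^(f_k), where Y = \<mu>_k M(e_k) = M(-e_k) P for a binomial
  P = q^a M([b^k]_+) + q^b M(-[b^k]_-).  Let Q be the multiplicative monoid generated by all
  binomials q^i M([b^k]_+) + q^j M(-[b^k]_-).  Each of the two algebras is carried into the
  other by right multiplication with a suitable element of Q, and Q satisfies the right Ore
  condition in both.  So if x = p y lies in the first algebra with y in the second, then
  x q = p (y q) is divisible by p in the first algebra for some q \<in> Q.  A binomial has two
  distinct monomials with unit coefficients, so comparing the extreme monomials in a suitable
  coordinate shows that p already divides x.  The reverse inclusion is symmetric.
*)

theory Submission
  imports Defs
begin

section \<open>Laurent polynomials in a central element\<close>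

lemma powi_quasi_commute:
  fixes u w s :: "'f::division_ring"
  assumes s_central: "\<And>x. s * x = x * s" and uw: "u * w = s * (w * u)"
  shows "u powi n * w = s powi n * (w * u powi n)"
proof -
  have pow: "u' ^ m * w = s' ^ m * (w * u' ^ m)"
    if central: "\<And>x. s' * x = x * s'" and uw': "u' * w = s' * (w * u')" for u' s' :: 'f and m
  proof (induction m)
    case (Suc m)
    have "u' * s' ^ m = s' ^ m * u'"
      using power_commuting_commutes[of s' u' m] central by simp
    then have "u' ^ Suc m * w = s' ^ m * (u' * w) * u' ^ m"
      by (simp only: power_Suc mult.assoc Suc) (simp only: mult.assoc[symmetric])
    also have "\<dots> = s' ^ Suc m * (w * u' ^ Suc m)"
      by (simp only: uw' power_Suc[of u'] power_Suc2[of s'] mult.assoc)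
    finally show ?case .
  qed simp
  have inv: "inverse u * w = inverse s * (w * inverse u)"
  proof (cases "u = 0 \<or> s = 0")
    case True
    then show ?thesis using uw by auto
  next
    case False
    have "w * inverse u = inverse u * (u * w) * inverse u"
      using False by (simp add: mult.assoc[symmetric])
    also have "\<dots> = inverse u * s * w * (u * inverse u)"
      by (simp add: uw mult.assoc)
    also have "\<dots> = s * (inverse u * w)"
      using False s_central[of "inverse u"] by (simp add: mult.assoc[symmetric])
    finally show ?thesis using False by (simp add: mult.assoc[symmetric])
  qed
  have "inverse s * x = x * inverse s" for x
    by (rule mult_commute_imp_mult_inverse_commute) (simp add: s_central)
  then show ?thesis
    using pow[OF s_central uw] pow[OF _ inv] by (simp add: power_int_def)
qed

context
  fixes t :: "'f::division_ring"
  assumes ct: "central_transcendental t"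
begin

lemma t_nonzero: "t \<noteq> 0"
  using ct by (simp add: central_transcendental_def)

lemma powi_t_central: "t powi i * x = x * t powi i"
proof -
  have "t * x = 1 * (x * t)"
    using ct by (simp add: central_transcendental_def)
  then show ?thesis
    using powi_quasi_commute[where s = 1] by simp
qed

lemma powi_t_left_commute: "x * (t powi i * y) = t powi i * (x * y)"
  by (simp only: mult.assoc[symmetric] powi_t_central[of i x])

lemma powi_t_add: "t powi (i + j) = t powi i * t powi j"
  using t_nonzero by (simp add: power_int_add)

lemma powi_t_quasi_commute_sym:
  assumes "x * y = t powi c * (y * x)"
  shows "y * x = t powi (- c) * (x * y)"
  using assms t_nonzero by (simp add: mult.assoc[symmetric] powi_t_add[symmetric])

lemma sum_powi_in_laurent_ring:
  assumes "finite I"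
  shows "(\<Sum>i\<in>I. of_int (c i) * t powi (h i)) \<in> laurent_ring t"
proof -
  have "(\<Sum>i\<in>I. of_int (c i) * t powi (h i)) =
      (\<Sum>m\<in>h ` I. \<Sum>i\<in>{x \<in> I. h x = m}. of_int (c i) * t powi (h i))"
    by (rule sum.image_gen[OF assms])
  also have "\<dots> = (\<Sum>m\<in>h ` I. of_int (\<Sum>i\<in>{x \<in> I. h x = m}. c i) * t powi m)"
    by (intro sum.cong refl) (simp add: sum_distrib_right)
  finally show ?thesis
    unfolding laurent_ring_def using assms
    by (auto intro!: exI[of _ "h ` I"] exI[of _ "\<lambda>m. sum c {x \<in> I. h x = m}"])
qed

lemma laurent_ringE:
  assumes "a \<in> laurent_ring t"
  obtains K c where "finite K" "a = (\<Sum>k\<in>K. of_int (c k) * t powi k)"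
  using assms unfolding laurent_ring_def by blast

lemma laurent_ring_add:
  assumes "a \<in> laurent_ring t" "b \<in> laurent_ring t"
  shows "a + b \<in> laurent_ring t"
proof -
  obtain K c where K: "finite K" "a = (\<Sum>k\<in>K. of_int (c k) * t powi k)"
    using assms(1) by (rule laurent_ringE)
  obtain K' c' where K': "finite K'" "b = (\<Sum>k\<in>K'. of_int (c' k) * t powi k)"
    using assms(2) by (rule laurent_ringE)
  have "a + b = (\<Sum>i\<in>K <+> K'. of_int (case_sum c c' i) * t powi (case_sum id id i))"
    using K K' by (simp add: sum.Plus comp_def)
  then show ?thesis
    using sum_powi_in_laurent_ring[of "K <+> K'"] K K' by simp
qed

lemma laurent_ring_mult:
  assumes "a \<in> laurent_ring t" "b \<in> laurent_ring t"
  shows "a * b \<in> laurent_ring t"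
proof -
  obtain K c where K: "finite K" "a = (\<Sum>k\<in>K. of_int (c k) * t powi k)"
    using assms(1) by (rule laurent_ringE)
  obtain K' c' where K': "finite K'" "b = (\<Sum>k\<in>K'. of_int (c' k) * t powi k)"
    using assms(2) by (rule laurent_ringE)
  have summand: "(of_int (c i) * t powi i) * (of_int (c' j) * t powi j) = of_int (c i * c' j) * t powi (i + j)"
    for i j
  proof -
    have "(of_int (c i) * t powi i) * (of_int (c' j) * t powi j) = of_int (c i) * (t powi i * of_int (c' j)) * t powi j"
      by (simp only: mult.assoc)
    also have "t powi i * of_int (c' j) = of_int (c' j) * t powi i"
      by (rule powi_t_central)
    finally show ?thesis
      by (simp add: powi_t_add mult.assoc)
  qed
  have "a * b = (\<Sum>(i, j)\<in>K \<times> K'. of_int (c i * c' j) * t powi (i + j))"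
    unfolding K(2) K'(2) sum_product sum.cartesian_product summand ..
  then show ?thesis
    using sum_powi_in_laurent_ring[of "K \<times> K'" "\<lambda>(i, j). c i * c' j" "\<lambda>(i, j). i + j"] K K'
    by (simp add: case_prod_beta)
qed

lemma of_int_powi_in_laurent_ring: "of_int c * t powi i \<in> laurent_ring t"
  using sum_powi_in_laurent_ring[of "{()}" "\<lambda>_. c" "\<lambda>_. i"] by simp

lemma powi_in_laurent_ring: "t powi i \<in> laurent_ring t"
  using of_int_powi_in_laurent_ring[of 1 i] by simp

lemma of_int_in_laurent_ring: "of_int c \<in> laurent_ring t"
  using of_int_powi_in_laurent_ring[of c 0] by simp

lemma laurent_ring_zero: "0 \<in> laurent_ring t"
  using of_int_in_laurent_ring[of 0] by simp

lemma laurent_ring_one: "1 \<in> laurent_ring t"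
  using of_int_in_laurent_ring[of 1] by simp

lemma laurent_ring_uminus: "a \<in> laurent_ring t \<Longrightarrow> - a \<in> laurent_ring t"
  using laurent_ring_mult[OF of_int_in_laurent_ring[of "-1"]] by simp

lemma laurent_ring_diff: "a \<in> laurent_ring t \<Longrightarrow> b \<in> laurent_ring t \<Longrightarrow> a - b \<in> laurent_ring t"
  unfolding diff_conv_add_uminus by (intro laurent_ring_add laurent_ring_uminus)

lemma laurent_ring_sum: "(\<And>i. i \<in> I \<Longrightarrow> f i \<in> laurent_ring t) \<Longrightarrow> sum f I \<in> laurent_ring t"
  by (induction I rule: infinite_finite_induct) (auto simp: laurent_ring_zero laurent_ring_add)

lemma laurent_ring_central:
  assumes "a \<in> laurent_ring t"
  shows "a * x = x * a"
proof -
  obtain K c where K: "finite K" "a = (\<Sum>k\<in>K. of_int (c k) * t powi k)"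
    using assms by (rule laurent_ringE)
  show ?thesis
    unfolding K(2) sum_distrib_right sum_distrib_left
    by (intro sum.cong refl) (metis mult.assoc mult_of_int_commute powi_t_central)
qed

context
  fixes p :: 'f
  assumes p: "p \<in> laurent_ring t"
begin

lemma A_dvd_zero: "A_dvd t p 0"
  unfolding A_dvd_def using laurent_ring_zero by force

lemma A_dvd_add: "A_dvd t p x \<Longrightarrow> A_dvd t p y \<Longrightarrow> A_dvd t p (x + y)"
  unfolding A_dvd_def by (metis laurent_ring_add distrib_left)

lemma A_dvd_diff: "A_dvd t p x \<Longrightarrow> A_dvd t p y \<Longrightarrow> A_dvd t p (x - y)"
  unfolding A_dvd_def by (metis laurent_ring_add laurent_ring_uminus right_diff_distrib diff_conv_add_uminus)

lemma A_dvd_sum: "(\<And>i. i \<in> I \<Longrightarrow> A_dvd t p (f i)) \<Longrightarrow> A_dvd t p (sum f I)"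
  by (induction I rule: infinite_finite_induct) (auto simp: A_dvd_zero A_dvd_add)

lemma A_dvd_mult_right: "A_dvd t p x \<Longrightarrow> a \<in> laurent_ring t \<Longrightarrow> A_dvd t p (x * a)"
  unfolding A_dvd_def by (metis laurent_ring_mult mult.assoc)

lemma A_dvd_mult_powi_iff: "A_dvd t p (x * t powi i) \<longleftrightarrow> A_dvd t p x"
proof
  assume "A_dvd t p (x * t powi i)"
  then have "A_dvd t p (x * t powi i * t powi (- i))"
    by (rule A_dvd_mult_right[OF _ powi_in_laurent_ring])
  then show "A_dvd t p x"
    using t_nonzero by (simp add: mult.assoc power_int_minus)
qed (rule A_dvd_mult_right[OF _ powi_in_laurent_ring])

lemma A_dvd_sum_remove:
  assumes Z: "finite Z" "z0 \<in> Z" and sum: "A_dvd t p (sum f Z)"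
    and others: "\<And>z. z \<in> Z - {z0} \<Longrightarrow> A_dvd t p (f z)"
  shows "A_dvd t p (f z0)"
proof -
  have "f z0 = sum f Z - sum f (Z - {z0})"
    by (simp only: sum.remove[OF Z] add_diff_cancel_right')
  moreover have "A_dvd t p (sum f (Z - {z0}))"
    using others by (rule A_dvd_sum)
  ultimately show ?thesis
    using A_dvd_diff[OF sum] by simp
qed
end

end

section \<open>Binomial monoids and the Ore condition\<close>

inductive_set binomial_monoid :: "'f::division_ring \<Rightarrow> 'f \<Rightarrow> 'f \<Rightarrow> 'f set" for t xa xb where
  one: "1 \<in> binomial_monoid t xa xb"
| binomial: "q \<in> binomial_monoid t xa xb \<Longrightarrow> (t powi i * xa + t powi j * xb) * q \<in> binomial_monoid t xa xb"

lemma binomial_monoid_mult: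
  "q1 \<in> binomial_monoid t xa xb \<Longrightarrow> q2 \<in> binomial_monoid t xa xb \<Longrightarrow> q1 * q2 \<in> binomial_monoid t xa xb"
  by (induction q1 rule: binomial_monoid.induct) (auto simp: mult.assoc intro: binomial_monoid.binomial)

lemma mult_commute_if_factors_commute:
  fixes a b c :: "'a::semigroup_mult"
  assumes "a * c = c * a" "b * c = c * b"
  shows "a * b * c = c * (a * b)"
proof -
  have "a * b * c = a * (c * b)"
    by (simp add: mult.assoc assms(2))
  also have "\<dots> = c * (a * b)"
    by (simp add: mult.assoc[symmetric] assms(1))
  finally show ?thesis .
qed

lemma binomial_monoid_commute:
  assumes ct: "central_transcendental t" and ab: "xa * xb = xb * xa"
    and q1: "q1 \<in> binomial_monoid t xa xb" and q2: "q2 \<in> binomial_monoid t xa xb"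
  shows "q1 * q2 = q2 * q1"
proof -
  have binomial_commute: "(t powi i * xa + t powi j * xb) * y = y * (t powi i * xa + t powi j * xb)"
    if "xa * y = y * xa" "xb * y = y * xb" for y i j
    using that by (simp only: distrib_left distrib_right mult.assoc powi_t_left_commute[OF ct, of y])
  have commute_generators: "q * xa = xa * q \<and> q * xb = xb * q" if "q \<in> binomial_monoid t xa xb" for q
    using that
  proof induction
    case (binomial q i j)
    then show ?case
      using binomial_commute[of xa] binomial_commute[of xb] ab
      by (simp add: mult_commute_if_factors_commute)
  qed simp
  from q2 show ?thesis
  proof induction
    case (binomial q i j)
    then show ?case
      using binomial_commute[of q1] commute_generators[OF q1]
      by (simp add: mult_commute_if_factors_commute)
  qed simp
qed

lemma binomial_monoid_subset_Tge:
  fixes inv :: "nat set"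
  assumes "central_transcendental t" "xa \<in> Tge t N ex inv g" "xb \<in> Tge t N ex inv g"
  shows "binomial_monoid t xa xb \<subseteq> Tge t N ex inv g"
proof
  fix q assume "q \<in> binomial_monoid t xa xb"
  then show "q \<in> Tge t N ex inv g"
  proof induction
    case (binomial q i j)
    have "t powi e \<in> Tge t N ex inv g" for e
      by (rule Tge.scalar[OF powi_in_laurent_ring[OF assms(1)]])
    then show ?case
      using assms binomial.IH by (blast intro: Tge.add Tge.mult)
  qed (rule Tge.scalar[OF laurent_ring_one[OF assms(1)]])
qed

definition normalizes :: "'a::semiring set \<Rightarrow> 'a \<Rightarrow> bool" where
  "normalizes Q x \<longleftrightarrow> (\<forall>q\<in>Q. \<exists>q'\<in>Q. x * q' = q * x) \<and> (\<forall>q\<in>Q. \<exists>q'\<in>Q. q' * x = x * q)"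

lemma normalizes_inverse:
  fixes x :: "'f::division_ring"
  assumes "normalizes Q x"
  shows "normalizes Q (inverse x)"
proof (cases "x = 0")
  case True
  then show ?thesis unfolding normalizes_def by auto
next
  case False
  have "inverse x * q' = q * inverse x" if "q' * x = x * q" for q q'
  proof -
    have "inverse x * q' = inverse x * (q' * x) * inverse x"
      using False by (simp add: mult.assoc)
    then show ?thesis
      using False that by (simp add: mult.assoc[symmetric])
  qed
  moreover have "q' * inverse x = inverse x * q" if "x * q' = q * x" for q q'
  proof -
    have "q' * inverse x = inverse x * (x * q') * inverse x"
      using False by (simp add: mult.assoc[symmetric])
    then show ?thesis
      using False that by (simp add: mult.assoc)
  qed
  ultimately show ?thesis
    using assms unfolding normalizes_def by blast
qed

lemma normalizes_if_commute: "(\<And>q. q \<in> Q \<Longrightarrow> x * q = q * x) \<Longrightarrow> normalizes Q x"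
  unfolding normalizes_def by metis

definition right_Ore_element :: "'a::semiring set \<Rightarrow> 'a set \<Rightarrow> 'a \<Rightarrow> bool" where
  "right_Ore_element Q T z \<longleftrightarrow> (\<forall>q\<in>Q. \<exists>q'\<in>Q. \<exists>z'\<in>T. z * q' = q * z')"

lemma right_Ore_element_if_normalizes: "z \<in> T \<Longrightarrow> normalizes Q z \<Longrightarrow> right_Ore_element Q T z"
  unfolding normalizes_def right_Ore_element_def by blast

lemma normalizes_binomial_monoid:
  assumes ct: "central_transcendental t"
    and a: "xa * y = t powi c1 * (y * xa)" and b: "xb * y = t powi c2 * (y * xb)"
  shows "normalizes (binomial_monoid t xa xb) y"
proof -
  let ?Q = "binomial_monoid t xa xb"
  have shift: "t powi i * x * y = y * (t powi (i + c) * x)" if "x * y = t powi c * (y * x)" for x c i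
    using that by (simp only: powi_t_add[OF ct] mult.assoc powi_t_left_commute[OF ct, of y])
  have binomial_shift: "(t powi i * xa + t powi j * xb) * y = y * (t powi (i + c1) * xa + t powi (j + c2) * xb)"
    for i j
    using shift[OF a, of i] shift[OF b, of j] by (simp add: distrib_left distrib_right)
  have "\<exists>q'\<in>?Q. y * q' = q * y" if "q \<in> ?Q" for q
    using that
  proof induction
    case (binomial q i j)
    then obtain q' where q': "q' \<in> ?Q" "y * q' = q * y" by blast
    have "y * ((t powi (i + c1) * xa + t powi (j + c2) * xb) * q') = (t powi i * xa + t powi j * xb) * q * y"
      by (simp only: mult.assoc[symmetric] binomial_shift[symmetric]) (simp only: mult.assoc q'(2))
    then show ?case
      using binomial_monoid.binomial[OF q'(1)] by blast
  qed (use binomial_monoid.one in force)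
  moreover have "\<exists>q'\<in>?Q. q' * y = y * q" if "q \<in> ?Q" for q
    using that
  proof induction
    case (binomial q i j)
    then obtain q' where q': "q' \<in> ?Q" "q' * y = y * q" by blast
    have shift_back: "(t powi (i - c1) * xa + t powi (j - c2) * xb) * y = y * (t powi i * xa + t powi j * xb)"
      using binomial_shift[of "i - c1" "j - c2"] by simp
    have "(t powi (i - c1) * xa + t powi (j - c2) * xb) * q' * y = y * ((t powi i * xa + t powi j * xb) * q)"
      by (simp only: mult.assoc q'(2)) (simp only: mult.assoc[symmetric] shift_back)
    then show ?case
      using binomial_monoid.binomial[OF q'(1)] by blast
  qed (use binomial_monoid.one in force)
  ultimately show ?thesis unfolding normalizes_def by blast
qed

lemma inter_smul_set_subset:
  fixes p :: "'f::division_ring"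
  assumes frac: "\<And>y. y \<in> T2 \<Longrightarrow> \<exists>q\<in>Q. y * q \<in> T1"
    and cancel: "\<And>x q. x \<in> T1 \<Longrightarrow> q \<in> Q \<Longrightarrow> x * q \<in> smul_set p T1 \<Longrightarrow> x \<in> smul_set p T1"
    and p: "p \<in> T2" and T2_mult: "\<And>u v. u \<in> T2 \<Longrightarrow> v \<in> T2 \<Longrightarrow> u * v \<in> T2"
  shows "T1 \<inter> smul_set p T2 \<subseteq> smul_set p T1 \<inter> T2"
proof
  fix x assume x: "x \<in> T1 \<inter> smul_set p T2"
  then obtain y where y: "y \<in> T2" "x = p * y"
    unfolding smul_set_def by blast
  obtain q where q: "q \<in> Q" "y * q \<in> T1"
    using frac[OF y(1)] by blast
  have "x * q \<in> smul_set p T1"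
    using y(2) q(2) unfolding smul_set_def by (auto simp: mult.assoc)
  then have "x \<in> smul_set p T1"
    using cancel x q(1) by blast
  moreover have "x \<in> T2"
    using y p T2_mult by simp
  ultimately show "x \<in> smul_set p T1 \<inter> T2" by blast
qed

context
  fixes t :: "'f::division_ring" and N :: nat and ex inv :: "nat set"
  assumes ct: "central_transcendental t"
begin

lemma Tge_pow: "x \<in> Tge t N ex inv g \<Longrightarrow> x ^ n \<in> Tge t N ex inv g"
  by (induction n) (auto intro: Tge.mult Tge.scalar laurent_ring_one[OF ct])

lemma Tge_sum: "(\<And>i. i \<in> I \<Longrightarrow> f i \<in> Tge t N ex inv g) \<Longrightarrow> sum f I \<in> Tge t N ex inv g"
  by (induction I rule: infinite_finite_induct) (auto intro: Tge.add Tge.scalar laurent_ring_zero[OF ct])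

lemma right_Ore_element_add:
  assumes Q_comm: "\<And>q1 q2. q1 \<in> Q \<Longrightarrow> q2 \<in> Q \<Longrightarrow> q1 * q2 = q2 * q1"
    and Q_mult: "\<And>q1 q2. q1 \<in> Q \<Longrightarrow> q2 \<in> Q \<Longrightarrow> q1 * q2 \<in> Q"
    and Q_sub: "Q \<subseteq> Tge t N ex inv g"
    and x: "right_Ore_element Q (Tge t N ex inv g) x" and y: "right_Ore_element Q (Tge t N ex inv g) y"
  shows "right_Ore_element Q (Tge t N ex inv g) (x + y)"
  unfolding right_Ore_element_def
proof
  fix q assume q: "q \<in> Q"
  obtain q1 z1 where 1: "q1 \<in> Q" "z1 \<in> Tge t N ex inv g" "x * q1 = q * z1"
    using x q unfolding right_Ore_element_def by blast
  obtain q2 z2 where 2: "q2 \<in> Q" "z2 \<in> Tge t N ex inv g" "y * q2 = q * z2"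
    using y q unfolding right_Ore_element_def by blast
  have "(x + y) * (q1 * q2) = x * q1 * q2 + y * q2 * q1"
    by (simp add: distrib_right mult.assoc Q_comm[OF 1(1) 2(1)])
  also have "\<dots> = q * (z1 * q2 + z2 * q1)"
    using 1(3) 2(3) by (simp add: distrib_left mult.assoc)
  finally have "(x + y) * (q1 * q2) = q * (z1 * q2 + z2 * q1)" .
  moreover have "z1 * q2 + z2 * q1 \<in> Tge t N ex inv g"
    using 1 2 Q_sub by (blast intro: Tge.add Tge.mult)
  ultimately show "\<exists>q'\<in>Q. \<exists>z'\<in>Tge t N ex inv g. (x + y) * q' = q * z'"
    using Q_mult[OF 1(1) 2(1)] by blast
qed

lemma right_Ore_element_mult:
  assumes x: "right_Ore_element Q (Tge t N ex inv g) x" and y: "right_Ore_element Q (Tge t N ex inv g) y"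
  shows "right_Ore_element Q (Tge t N ex inv g) (x * y)"
  unfolding right_Ore_element_def
proof
  fix q assume q: "q \<in> Q"
  obtain q1 z1 where 1: "q1 \<in> Q" "z1 \<in> Tge t N ex inv g" "x * q1 = q * z1"
    using x q unfolding right_Ore_element_def by blast
  obtain q2 z2 where 2: "q2 \<in> Q" "z2 \<in> Tge t N ex inv g" "y * q2 = q1 * z2"
    using y 1(1) unfolding right_Ore_element_def by blast
  have "x * y * q2 = q * (z1 * z2)"
    by (simp add: mult.assoc 2(3)) (simp add: mult.assoc[symmetric] 1(3))
  then show "\<exists>q'\<in>Q. \<exists>z'\<in>Tge t N ex inv g. x * y * q' = q * z'"
    using 2(1) Tge.mult[OF 1(2) 2(2)] by blast
qed

lemma Tge_right_Ore:
  assumes Q_comm: "\<And>q1 q2. q1 \<in> Q \<Longrightarrow> q2 \<in> Q \<Longrightarrow> q1 * q2 = q2 * q1"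
    and Q_mult: "\<And>q1 q2. q1 \<in> Q \<Longrightarrow> q2 \<in> Q \<Longrightarrow> q1 * q2 \<in> Q"
    and Q_sub: "Q \<subseteq> Tge t N ex inv g"
    and ex_inv: "ex \<union> inv \<subseteq> {1..N}"
    and normal: "\<And>i. i \<in> {1..N} \<Longrightarrow> normalizes Q (g i)"
    and z: "z \<in> Tge t N ex inv g"
  shows "right_Ore_element Q (Tge t N ex inv g) z"
  using z
proof induction
  case (scalar a)
  then show ?case
    using laurent_ring_central[OF ct] by (intro right_Ore_element_if_normalizes normalizes_if_commute Tge.scalar)
next
  case (gen i)
  then show ?case
    using normal by (intro right_Ore_element_if_normalizes Tge.gen)
next
  case (geninv j)
  then show ?case
    using ex_inv normal by (intro right_Ore_element_if_normalizes normalizes_inverse Tge.geninv) auto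
next
  case (add x y)
  then show ?case
    using Q_comm Q_mult Q_sub by (intro right_Ore_element_add)
next
  case (mult x y)
  then show ?case
    by (intro right_Ore_element_mult)
qed

lemma Tge_right_fractions:
  assumes Q_one: "1 \<in> Q"
    and Q_comm: "\<And>q1 q2. q1 \<in> Q \<Longrightarrow> q2 \<in> Q \<Longrightarrow> q1 * q2 = q2 * q1"
    and Q_mult: "\<And>q1 q2. q1 \<in> Q \<Longrightarrow> q2 \<in> Q \<Longrightarrow> q1 * q2 \<in> Q"
    and Q_sub: "Q \<subseteq> Tge t N ex inv h"
    and Ore: "\<And>z. z \<in> Tge t N ex inv h \<Longrightarrow> right_Ore_element Q (Tge t N ex inv h) z"
    and gen_fraction: "\<And>i. i \<in> {1..N} \<Longrightarrow> \<exists>q\<in>Q. g i * q \<in> Tge t N ex inv h"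
    and geninv_fraction: "\<And>j. j \<in> ex \<union> inv \<Longrightarrow> \<exists>q\<in>Q. inverse (g j) * q \<in> Tge t N ex inv h"
    and y: "y \<in> Tge t N ex inv g"
  shows "\<exists>q\<in>Q. y * q \<in> Tge t N ex inv h"
  using y
proof induction
  case (scalar a)
  then show ?case using Q_one Tge.scalar by force
next
  case (add x y)
  obtain q1 where 1: "q1 \<in> Q" "x * q1 \<in> Tge t N ex inv h" using add.IH(1) by blast
  obtain q2 where 2: "q2 \<in> Q" "y * q2 \<in> Tge t N ex inv h" using add.IH(2) by blast
  have "(x + y) * (q1 * q2) = x * q1 * q2 + y * q2 * q1"
    by (simp add: distrib_right mult.assoc Q_comm[OF 1(1) 2(1)])
  moreover have "x * q1 * q2 + y * q2 * q1 \<in> Tge t N ex inv h"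
    using 1 2 Q_sub by (blast intro: Tge.add Tge.mult)
  ultimately have "(x + y) * (q1 * q2) \<in> Tge t N ex inv h"
    by simp
  then show ?case
    using Q_mult[OF 1(1) 2(1)] by blast
next
  case (mult x y)
  obtain q1 where 1: "q1 \<in> Q" "x * q1 \<in> Tge t N ex inv h" using mult.IH(1) by blast
  obtain q2 where 2: "q2 \<in> Q" "y * q2 \<in> Tge t N ex inv h" using mult.IH(2) by blast
  obtain q' z' where 3: "q' \<in> Q" "z' \<in> Tge t N ex inv h" "y * q2 * q' = q1 * z'"
    using Ore[OF 2(2)] 1(1) unfolding right_Ore_element_def by blast
  have "x * y * (q2 * q') = x * q1 * z'"
    by (simp add: mult.assoc 3(3)[unfolded mult.assoc])
  then have "x * y * (q2 * q') \<in> Tge t N ex inv h"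
    using Tge.mult[OF 1(2) 3(2)] by simp
  then show ?case
    using Q_mult[OF 2(1) 3(1)] by blast
qed (use gen_fraction geninv_fraction in auto)

end

section \<open>Quasi-toric frames\<close>

lemma zvec_add: "f \<in> zvec N \<Longrightarrow> g \<in> zvec N \<Longrightarrow> f + g \<in> zvec N"
  unfolding zvec_def by auto

lemma zvec_uminus: "f \<in> zvec N \<Longrightarrow> - f \<in> zvec N"
  unfolding zvec_def by auto

lemma zvec_zero: "0 \<in> zvec N"
  unfolding zvec_def by auto

lemma zvec_unitv: "i \<in> {1..N} \<Longrightarrow> unitv i \<in> zvec N"
  unfolding zvec_def unitv_def by auto

definition exponent_cone :: "nat \<Rightarrow> nat set \<Rightarrow> (nat \<Rightarrow> int) set" where
  "exponent_cone N U = {f \<in> zvec N. \<forall>i\<in>{1..N} - U. 0 \<le> f i}"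

lemma exponent_cone_subset_zvec: "exponent_cone N U \<subseteq> zvec N"
  unfolding exponent_cone_def by auto

lemma exponent_cone_add:
  "f \<in> exponent_cone N U \<Longrightarrow> g \<in> exponent_cone N U \<Longrightarrow> f + g \<in> exponent_cone N U"
  unfolding exponent_cone_def by (auto intro: zvec_add)

lemma exponent_cone_zero: "0 \<in> exponent_cone N U"
  unfolding exponent_cone_def using zvec_zero by auto

lemma exponent_cone_unitv: "i \<in> {1..N} \<Longrightarrow> unitv i \<in> exponent_cone N U"
  unfolding exponent_cone_def using zvec_unitv by (auto simp: unitv_def)

lemma exponent_cone_neg_unitv:
  "j \<in> {1..N} \<Longrightarrow> j \<in> U \<Longrightarrow> - unitv j \<in> exponent_cone N U"
  unfolding exponent_cone_def using zvec_unitv by (auto simp: unitv_def intro!: zvec_uminus)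

lemma obtain_max_image:
  fixes \<phi> :: "'a \<Rightarrow> 'b::linorder"
  assumes "finite A" "A \<noteq> {}"
  obtains x where "x \<in> A" "\<And>y. y \<in> A \<Longrightarrow> \<phi> y \<le> \<phi> x"
proof -
  have "Max (\<phi> ` A) \<in> \<phi> ` A"
    using assms by (intro Max_in) auto
  then obtain x where x: "x \<in> A" "Max (\<phi> ` A) = \<phi> x"
    by blast
  have "\<phi> y \<le> \<phi> x" if "y \<in> A" for y
    unfolding x(2)[symmetric] using assms(1) that by (intro Max_ge) auto
  with x(1) show ?thesis
    by (rule that)
qed

(* A toric frame whose commutation exponents are left unspecified: the mutated monomials
   below form one as well. *)
locale quasi_toric_frame =
  fixes t :: "'f::division_ring" and N :: nat and Mon :: "(nat \<Rightarrow> int) \<Rightarrow> 'f"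
  assumes ct: "central_transcendental t"
    and mon_zero: "Mon 0 = 1"
    and mon_mult_ex: "\<And>f g. f \<in> zvec N \<Longrightarrow> g \<in> zvec N \<Longrightarrow> \<exists>e. Mon f * Mon g = t powi e * Mon (f + g)"
    and mon_indep: "\<And>S c. finite S \<Longrightarrow> S \<subseteq> zvec N \<Longrightarrow> (\<forall>f\<in>S. c f \<in> laurent_ring t) \<Longrightarrow>
      (\<Sum>f\<in>S. c f * Mon f) = 0 \<Longrightarrow> \<forall>f\<in>S. c f = 0"
begin

definition mon_exp :: "(nat \<Rightarrow> int) \<Rightarrow> (nat \<Rightarrow> int) \<Rightarrow> int" where
  "mon_exp f g = (SOME e. Mon f * Mon g = t powi e * Mon (f + g))"

lemma mon_mult: "f \<in> zvec N \<Longrightarrow> g \<in> zvec N \<Longrightarrow> Mon f * Mon g = t powi (mon_exp f g) * Mon (f + g)"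
  unfolding mon_exp_def using mon_mult_ex by (rule someI_ex)

lemma mon_add: "f \<in> zvec N \<Longrightarrow> g \<in> zvec N \<Longrightarrow> Mon (f + g) = t powi (- mon_exp f g) * (Mon f * Mon g)"
  using mon_mult t_nonzero[OF ct] by (simp add: mult.assoc[symmetric] power_int_minus)

lemma mon_nonzero: "f \<in> zvec N \<Longrightarrow> Mon f \<noteq> 0"
  using mon_indep[of "{f}" "\<lambda>_. 1"] laurent_ring_one[OF ct] by auto

lemma mon_scale:
  assumes "v \<in> zvec N"
  shows "\<exists>e. Mon (\<lambda>i. int n * v i) = t powi e * Mon v ^ n"
proof (induction n)
  case 0
  then show ?case using mon_zero by (intro exI[of _ 0]) (simp add: zero_fun_def)
next
  case (Suc n)
  then obtain e where e: "Mon (\<lambda>i. int n * v i) = t powi e * Mon v ^ n" by blast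
  have nv: "(\<lambda>i. int n * v i) \<in> zvec N" using assms unfolding zvec_def by auto
  have "(\<lambda>i. int (Suc n) * v i) = (\<lambda>i. int n * v i) + v" by (auto simp: algebra_simps)
  then have "Mon (\<lambda>i. int (Suc n) * v i) = t powi (- mon_exp (\<lambda>i. int n * v i) v) * (t powi e * Mon v ^ n * Mon v)"
    using mon_add[OF nv assms] e by simp
  also have "\<dots> = t powi (- mon_exp (\<lambda>i. int n * v i) v + e) * Mon v ^ Suc n"
    by (simp only: powi_t_add[OF ct] mult.assoc power_Suc2)
  finally show ?case by blast
qed

definition mon_span :: "(nat \<Rightarrow> int) set \<Rightarrow> 'f set" where
  "mon_span C = {\<Sum>f\<in>S. c f * Mon f | S c. finite S \<and> S \<subseteq> C \<and> (\<forall>f\<in>S. c f \<in> laurent_ring t)}"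

lemma mon_spanI:
  "finite S \<Longrightarrow> S \<subseteq> C \<Longrightarrow> (\<And>f. f \<in> S \<Longrightarrow> c f \<in> laurent_ring t) \<Longrightarrow>
    (\<Sum>f\<in>S. c f * Mon f) \<in> mon_span C"
  unfolding mon_span_def by blast

lemma mon_spanE:
  assumes "x \<in> mon_span C"
  obtains S c where "finite S" "S \<subseteq> C" "\<And>f. f \<in> S \<Longrightarrow> c f \<in> laurent_ring t" "x = (\<Sum>f\<in>S. c f * Mon f)"
  using assms unfolding mon_span_def by blast

lemma sum_mon_fibers:
  assumes "finite I"
  shows "(\<Sum>i\<in>I. c i * Mon (h i)) = (\<Sum>g\<in>h ` I. (\<Sum>i\<in>{i \<in> I. h i = g}. c i) * Mon g)"
proof -
  have "(\<Sum>i\<in>I. c i * Mon (h i)) = (\<Sum>g\<in>h ` I. \<Sum>i\<in>{i \<in> I. h i = g}. c i * Mon (h i))"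
    by (rule sum.image_gen[OF assms])
  also have "\<dots> = (\<Sum>g\<in>h ` I. (\<Sum>i\<in>{i \<in> I. h i = g}. c i) * Mon g)"
    by (intro sum.cong refl) (simp add: sum_distrib_right)
  finally show ?thesis .
qed

lemma sum_mon_in_mon_span:
  assumes "finite I" "h ` I \<subseteq> C" "\<And>i. i \<in> I \<Longrightarrow> c i \<in> laurent_ring t"
  shows "(\<Sum>i\<in>I. c i * Mon (h i)) \<in> mon_span C"
  unfolding sum_mon_fibers[OF assms(1)]
  by (rule mon_spanI) (use assms in \<open>auto intro!: laurent_ring_sum[OF ct]\<close>)

lemma fiber_sums_eq:
  assumes I: "finite I" "h ` I \<subseteq> zvec N" "\<And>i. i \<in> I \<Longrightarrow> c i \<in> laurent_ring t"
    and J: "finite J" "h' ` J \<subseteq> zvec N" "\<And>j. j \<in> J \<Longrightarrow> d j \<in> laurent_ring t"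
    and eq: "(\<Sum>i\<in>I. c i * Mon (h i)) = (\<Sum>j\<in>J. d j * Mon (h' j))"
  shows "(\<Sum>i\<in>{i \<in> I. h i = g}. c i) = (\<Sum>j\<in>{j \<in> J. h' j = g}. d j)"
proof -
  define G where "G = h ` I \<union> h' ` J"
  define cc where "cc g = (\<Sum>i\<in>{i \<in> I. h i = g}. c i)" for g
  define dd where "dd g = (\<Sum>j\<in>{j \<in> J. h' j = g}. d j)" for g
  have G: "finite G" "G \<subseteq> zvec N"
    using I J by (auto simp: G_def)
  have cc_out: "cc g = 0" if "g \<notin> h ` I" for g
    unfolding cc_def by (rule sum.neutral) (use that in auto)
  have dd_out: "dd g = 0" if "g \<notin> h' ` J" for g
    unfolding dd_def by (rule sum.neutral) (use that in auto)
  have "(\<Sum>i\<in>I. c i * Mon (h i)) = (\<Sum>g\<in>G. cc g * Mon g)"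
    unfolding sum_mon_fibers[OF I(1)] cc_def[symmetric]
    by (rule sum.mono_neutral_left) (use G cc_out in \<open>auto simp: G_def\<close>)
  moreover have "(\<Sum>j\<in>J. d j * Mon (h' j)) = (\<Sum>g\<in>G. dd g * Mon g)"
    unfolding sum_mon_fibers[OF J(1)] dd_def[symmetric]
    by (rule sum.mono_neutral_left) (use G dd_out in \<open>auto simp: G_def\<close>)
  ultimately have "(\<Sum>g\<in>G. (cc g - dd g) * Mon g) = 0"
    using eq by (simp add: left_diff_distrib sum_subtractf)
  moreover have "\<forall>g\<in>G. cc g - dd g \<in> laurent_ring t"
    unfolding cc_def dd_def using I J
    by (auto intro!: laurent_ring_diff[OF ct] laurent_ring_sum[OF ct])
  ultimately have "\<forall>g\<in>G. cc g = dd g"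
    using mon_indep[OF G, of "\<lambda>g. cc g - dd g"] by auto
  moreover have "cc g = 0 \<and> dd g = 0" if "g \<notin> G"
    using that cc_out dd_out by (simp add: G_def)
  ultimately have "cc g = dd g"
    by (cases "g \<in> G") auto
  then show ?thesis
    by (simp add: cc_def dd_def)
qed

lemma fiber_sum_eq_0:
  assumes "finite I" "h ` I \<subseteq> zvec N" "\<And>i. i \<in> I \<Longrightarrow> c i \<in> laurent_ring t"
    and "(\<Sum>i\<in>I. c i * Mon (h i)) = 0"
  shows "(\<Sum>i\<in>{i \<in> I. h i = g}. c i) = 0"
  using fiber_sums_eq[OF assms(1-3), where J = "{}" and h' = id and d = "\<lambda>_. 0"] assms(4) by simp

lemma mon_span_zero: "0 \<in> mon_span C"
  using mon_spanI[of "{}" C] by simp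

lemma mon_span_mon: "f \<in> C \<Longrightarrow> Mon f \<in> mon_span C"
  using mon_spanI[of "{f}" C "\<lambda>_. 1"] laurent_ring_one[OF ct] by simp

lemma mon_span_add:
  assumes "x \<in> mon_span C" "y \<in> mon_span C"
  shows "x + y \<in> mon_span C"
proof -
  obtain S c where S: "finite S" "S \<subseteq> C" "\<And>f. f \<in> S \<Longrightarrow> c f \<in> laurent_ring t" "x = (\<Sum>f\<in>S. c f * Mon f)"
    using mon_spanE[OF assms(1)] by blast
  obtain S' c' where S': "finite S'" "S' \<subseteq> C" "\<And>f. f \<in> S' \<Longrightarrow> c' f \<in> laurent_ring t" "y = (\<Sum>f\<in>S'. c' f * Mon f)"
    using mon_spanE[OF assms(2)] by blast
  have "x + y = (\<Sum>i\<in>S <+> S'. case_sum c c' i * Mon (case_sum id id i))"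
    using S S' by (simp add: sum.Plus comp_def)
  also have "\<dots> \<in> mon_span C"
    by (rule sum_mon_in_mon_span) (use S S' in auto)
  finally show ?thesis .
qed

lemma mon_span_scale:
  assumes "a \<in> laurent_ring t" "x \<in> mon_span C"
  shows "a * x \<in> mon_span C"
proof -
  obtain S c where S: "finite S" "S \<subseteq> C" "\<And>f. f \<in> S \<Longrightarrow> c f \<in> laurent_ring t" "x = (\<Sum>f\<in>S. c f * Mon f)"
    using mon_spanE[OF assms(2)] by blast
  have "a * x = (\<Sum>f\<in>S. (a * c f) * Mon f)"
    using S by (simp add: sum_distrib_left mult.assoc)
  then show ?thesis
    using S assms(1) laurent_ring_mult[OF ct] by (auto intro!: mon_spanI)
qed

lemma mon_span_uminus: "x \<in> mon_span C \<Longrightarrow> - x \<in> mon_span C"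
  using mon_span_scale[OF of_int_in_laurent_ring[OF ct, of "-1"]] by simp

lemma mon_span_laurent_ring: "0 \<in> C \<Longrightarrow> a \<in> laurent_ring t \<Longrightarrow> a \<in> mon_span C"
  using mon_span_scale[OF _ mon_span_mon, of a 0 C] mon_zero by simp

lemma mon_span_mono: "C \<subseteq> D \<Longrightarrow> mon_span C \<subseteq> mon_span D"
  unfolding mon_span_def by blast

lemma mon_span_sum: "(\<And>i. i \<in> I \<Longrightarrow> x i \<in> mon_span C) \<Longrightarrow> sum x I \<in> mon_span C"
  by (induction I rule: infinite_finite_induct) (auto simp: mon_span_zero mon_span_add)

lemma mon_span_mult:
  assumes C: "C \<subseteq> zvec N" "D \<subseteq> zvec N" "\<And>f g. f \<in> C \<Longrightarrow> g \<in> D \<Longrightarrow> f + g \<in> E"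
    and xy: "x \<in> mon_span C" "y \<in> mon_span D"
  shows "x * y \<in> mon_span E"
proof -
  obtain S c where S: "finite S" "S \<subseteq> C" "\<And>f. f \<in> S \<Longrightarrow> c f \<in> laurent_ring t" "x = (\<Sum>f\<in>S. c f * Mon f)"
    using mon_spanE[OF xy(1)] by blast
  obtain S' c' where S': "finite S'" "S' \<subseteq> D" "\<And>f. f \<in> S' \<Longrightarrow> c' f \<in> laurent_ring t" "y = (\<Sum>f\<in>S'. c' f * Mon f)"
    using mon_spanE[OF xy(2)] by blast
  have "(c f * Mon f) * (c' g * Mon g) = (c f * c' g * t powi (mon_exp f g)) * Mon (f + g)"
    if "f \<in> S" "g \<in> S'" for f g
  proof -
    have "(c f * Mon f) * (c' g * Mon g) = c f * (Mon f * c' g) * Mon g"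
      by (simp add: mult.assoc)
    also have "Mon f * c' g = c' g * Mon f"
      using laurent_ring_central[OF ct S'(3)[OF that(2)]] by simp
    moreover have "f \<in> zvec N" "g \<in> zvec N"
      using that S(2) S'(2) C(1,2) by auto
    ultimately show ?thesis
      by (simp add: mult.assoc mon_mult)
  qed
  then have "x * y = (\<Sum>(f, g)\<in>S \<times> S'. (c f * c' g * t powi (mon_exp f g)) * Mon (f + g))"
    unfolding S(4) S'(4) sum_product sum.cartesian_product by (intro sum.cong refl) auto
  also have "\<dots> \<in> mon_span E"
    unfolding case_prod_beta
    by (rule sum_mon_in_mon_span)
      (use S S' in \<open>auto intro!: C(3) laurent_ring_mult[OF ct] powi_in_laurent_ring[OF ct]\<close>)
  finally show ?thesis .
qed

lemma mon_span_disjoint: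
  assumes "C \<subseteq> zvec N" "D \<subseteq> zvec N" "C \<inter> D = {}" "x \<in> mon_span C" "x \<in> mon_span D"
  shows "x = 0"
proof -
  obtain S c where S: "finite S" "S \<subseteq> C" "\<And>f. f \<in> S \<Longrightarrow> c f \<in> laurent_ring t" "x = (\<Sum>f\<in>S. c f * Mon f)"
    using mon_spanE[OF assms(4)] by blast
  obtain S' d where S': "finite S'" "S' \<subseteq> D" "\<And>f. f \<in> S' \<Longrightarrow> d f \<in> laurent_ring t" "x = (\<Sum>f\<in>S'. d f * Mon f)"
    using mon_spanE[OF assms(5)] by blast
  have "c f = 0" if "f \<in> S" for f
  proof -
    have fibers: "{i \<in> S. id i = f} = {f}" "{j \<in> S'. id j = f} = {}"
      using that S(2) S'(2) assms(3) by auto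
    have "(\<Sum>i\<in>{i \<in> S. id i = f}. c i) = (\<Sum>j\<in>{j \<in> S'. id j = f}. d j)"
      using S S' assms(1,2) by (intro fiber_sums_eq) auto
    then show ?thesis unfolding fibers by simp
  qed
  then show ?thesis using S(4) by simp
qed

lemma mon_span_graded_sum_eq_0:
  assumes J: "finite J" and D: "\<And>j. j \<in> J \<Longrightarrow> D j \<subseteq> zvec N"
    and disjoint: "\<And>j j'. j \<in> J \<Longrightarrow> j' \<in> J \<Longrightarrow> j \<noteq> j' \<Longrightarrow> D j \<inter> D j' = {}"
    and x: "\<And>j. j \<in> J \<Longrightarrow> x j \<in> mon_span (D j)" and sum: "(\<Sum>j\<in>J. x j) = 0" and j0: "j0 \<in> J"
  shows "x j0 = 0"
proof (rule mon_span_disjoint[where C = "D j0" and D = "\<Union>j\<in>J - {j0}. D j"])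
  let ?D' = "\<Union>j\<in>J - {j0}. D j"
  have "x j0 + (\<Sum>j\<in>J - {j0}. x j) = 0"
    using sum sum.remove[OF J j0, of x] by simp
  then have "x j0 = - (\<Sum>j\<in>J - {j0}. x j)"
    by (simp add: eq_neg_iff_add_eq_0)
  also have "\<dots> \<in> mon_span ?D'"
  proof (intro mon_span_uminus mon_span_sum)
    fix j assume "j \<in> J - {j0}"
    then show "x j \<in> mon_span ?D'"
      using x[of j] mon_span_mono[of "D j" ?D'] by blast
  qed
  finally show "x j0 \<in> mon_span ?D'" .
  show "D j0 \<inter> ?D' = {}"
    using disjoint j0 by blast
  show "D j0 \<subseteq> zvec N" "?D' \<subseteq> zvec N" "x j0 \<in> mon_span (D j0)"
    using D x j0 by auto
qed

lemma mon_coordinate_in_Tge: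
  fixes inv :: "nat set"
  assumes gen: "\<And>i. i \<in> {1..N} \<Longrightarrow> g i = Mon (unitv i)"
    and geninv: "\<And>j. j \<in> ex \<union> inv \<Longrightarrow> inverse (g j) = Mon (- unitv j)"
    and i: "i \<in> {1..N}" and m: "0 \<le> m \<or> i \<in> ex \<union> inv"
  shows "Mon (\<lambda>l. m * unitv i l) \<in> Tge t N ex inv g"
proof (cases "0 \<le> m")
  case True
  then obtain n where n: "m = int n" using nonneg_int_cases by blast
  obtain e where "Mon (\<lambda>l. int n * unitv i l) = t powi e * Mon (unitv i) ^ n"
    using mon_scale[OF zvec_unitv[OF i]] by blast
  then show ?thesis
    using n gen[OF i] Tge_pow[OF ct Tge.gen[OF i]] Tge.scalar[OF powi_in_laurent_ring[OF ct]]
    by (metis Tge.mult)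
next
  case False
  then obtain n where n: "m = - int n" using nonpos_int_cases by (metis linorder_linear)
  have ei: "i \<in> ex \<union> inv"
    using m False by blast
  obtain e where "Mon (\<lambda>l. int n * (- unitv i) l) = t powi e * Mon (- unitv i) ^ n"
    using mon_scale[OF zvec_uminus[OF zvec_unitv[OF i]]] by blast
  moreover have "(\<lambda>l. m * unitv i l) = (\<lambda>l. int n * (- unitv i) l)"
    using n by auto
  ultimately show ?thesis
    using geninv[OF ei] Tge_pow[OF ct Tge.geninv[OF ei]] Tge.scalar[OF powi_in_laurent_ring[OF ct]]
    by (metis Tge.mult)
qed

lemma mon_in_Tge:
  fixes inv :: "nat set"
  assumes gen: "\<And>i. i \<in> {1..N} \<Longrightarrow> g i = Mon (unitv i)"
    and geninv: "\<And>j. j \<in> ex \<union> inv \<Longrightarrow> inverse (g j) = Mon (- unitv j)"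
    and f: "f \<in> exponent_cone N (ex \<union> inv)"
  shows "Mon f \<in> Tge t N ex inv g"
proof -
  let ?T = "Tge t N ex inv g"
  define restrict where "restrict K = (\<lambda>l. if l \<in> K then f l else 0)" for K
  have "Mon (restrict K) \<in> ?T" if "finite K" "K \<subseteq> {1..N}" for K
    using that
  proof (induction K rule: finite_induct)
    case empty
    have "restrict {} = 0" by (auto simp: restrict_def)
    then show ?case
      using mon_zero Tge.scalar[OF laurent_ring_one[OF ct]] by metis
  next
    case (insert i K)
    have zvec: "restrict K \<in> zvec N" "(\<lambda>l. f i * unitv i l) \<in> zvec N"
      using insert.prems unfolding restrict_def zvec_def unitv_def by auto
    have "restrict (insert i K) = restrict K + (\<lambda>l. f i * unitv i l)"
      using insert.hyps(2) by (auto simp: restrict_def unitv_def)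
    then have "Mon (restrict (insert i K)) = t powi (- mon_exp (restrict K) (\<lambda>l. f i * unitv i l)) *
        (Mon (restrict K) * Mon (\<lambda>l. f i * unitv i l))"
      using mon_add[OF zvec] by (simp only:)
    moreover have "0 \<le> f i \<or> i \<in> ex \<union> inv"
      using f insert.prems unfolding exponent_cone_def by auto
    then have "Mon (\<lambda>l. f i * unitv i l) \<in> ?T"
      using insert.prems by (intro mon_coordinate_in_Tge[OF gen geninv]) auto
    moreover have "Mon (restrict K) \<in> ?T"
      using insert.IH insert.prems by simp
    ultimately show ?case
      using Tge.mult Tge.scalar[OF powi_in_laurent_ring[OF ct]] by metis
  qed
  moreover have "restrict {1..N} = f"
    using f unfolding restrict_def exponent_cone_def zvec_def by auto
  ultimately show ?thesis by (metis finite_atLeastAtMost order_refl)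
qed

lemma Tge_subset_mon_span:
  fixes inv :: "nat set"
  assumes ex_inv: "ex \<union> inv \<subseteq> {1..N}"
    and gen: "\<And>i. i \<in> {1..N} \<Longrightarrow> g i = Mon (unitv i)"
    and geninv: "\<And>j. j \<in> ex \<union> inv \<Longrightarrow> inverse (g j) = Mon (- unitv j)"
    and x: "x \<in> Tge t N ex inv g"
  shows "x \<in> mon_span (exponent_cone N (ex \<union> inv))"
  using x
proof induction
  case (scalar a)
  then show ?case using mon_span_laurent_ring exponent_cone_zero by blast
next
  case (gen i)
  then show ?case using assms(2) mon_span_mon exponent_cone_unitv by simp
next
  case (geninv j)
  then show ?case using assms(3) ex_inv mon_span_mon exponent_cone_neg_unitv by auto
next
  case (add x y)
  then show ?case by (blast intro: mon_span_add)
next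
  case (mult x y)
  then show ?case
    using mon_span_mult[OF exponent_cone_subset_zvec exponent_cone_subset_zvec exponent_cone_add] by blast
qed

lemma Tge_eq_mon_span:
  fixes inv :: "nat set"
  assumes ex_inv: "ex \<union> inv \<subseteq> {1..N}"
    and gen: "\<And>i. i \<in> {1..N} \<Longrightarrow> g i = Mon (unitv i)"
    and geninv: "\<And>j. j \<in> ex \<union> inv \<Longrightarrow> inverse (g j) = Mon (- unitv j)"
  shows "Tge t N ex inv g = mon_span (exponent_cone N (ex \<union> inv))"
proof
  show "Tge t N ex inv g \<subseteq> mon_span (exponent_cone N (ex \<union> inv))"
    using Tge_subset_mon_span[OF assms] by blast
  show "mon_span (exponent_cone N (ex \<union> inv)) \<subseteq> Tge t N ex inv g"
  proof
    fix x assume "x \<in> mon_span (exponent_cone N (ex \<union> inv))"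
    then obtain S c where S: "S \<subseteq> exponent_cone N (ex \<union> inv)" "\<And>f. f \<in> S \<Longrightarrow> c f \<in> laurent_ring t"
      and x_eq: "x = (\<Sum>f\<in>S. c f * Mon f)"
      by (blast elim: mon_spanE)
    show "x \<in> Tge t N ex inv g"
      unfolding x_eq using S mon_in_Tge[OF gen geninv]
      by (blast intro: Tge_sum[OF ct] Tge.mult Tge.scalar)
  qed
qed

context
  fixes p :: 'f
  assumes p: "p \<in> laurent_ring t"
begin

lemma fiber_sum_dvd_if_in_smul_span:
  assumes I: "finite I" "h ` I \<subseteq> zvec N" "\<And>i. i \<in> I \<Longrightarrow> c i \<in> laurent_ring t"
    and x: "(\<Sum>i\<in>I. c i * Mon (h i)) \<in> smul_set p (mon_span (zvec N))"
  shows "A_dvd t p (\<Sum>i\<in>{i \<in> I. h i = g}. c i)"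
proof -
  obtain w where w: "w \<in> mon_span (zvec N)" "(\<Sum>i\<in>I. c i * Mon (h i)) = p * w"
    using x unfolding smul_set_def by blast
  obtain S d where S: "finite S" "S \<subseteq> zvec N" "\<And>f. f \<in> S \<Longrightarrow> d f \<in> laurent_ring t"
    and w_eq: "w = (\<Sum>f\<in>S. d f * Mon f)"
    using mon_spanE[OF w(1)] by blast
  have eq: "(\<Sum>i\<in>I. c i * Mon (h i)) = (\<Sum>f\<in>S. (p * d f) * Mon (id f))"
    unfolding w(2) w_eq by (simp add: sum_distrib_left mult.assoc)
  have "(\<Sum>i\<in>{i \<in> I. h i = g}. c i) = (\<Sum>f\<in>{f \<in> S. id f = g}. p * d f)"
    using S(2,3) p by (intro fiber_sums_eq[OF I S(1) _ _ eq]) (auto intro: laurent_ring_mult[OF ct])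
  also have "\<dots> = p * (\<Sum>f\<in>{f \<in> S. id f = g}. d f)"
    by (simp add: sum_distrib_left)
  finally have "(\<Sum>i\<in>{i \<in> I. h i = g}. c i) = p * (\<Sum>f\<in>{f \<in> S. id f = g}. d f)" .
  moreover have "(\<Sum>f\<in>{f \<in> S. id f = g}. d f) \<in> laurent_ring t"
    using S(3) by (intro laurent_ring_sum[OF ct]) auto
  ultimately show ?thesis
    unfolding A_dvd_def by blast
qed

lemma sum_mon_in_smul_span:
  assumes "finite S" "S \<subseteq> C" "\<And>f. f \<in> S \<Longrightarrow> A_dvd t p (c f)"
  shows "(\<Sum>f\<in>S. c f * Mon f) \<in> smul_set p (mon_span C)"
proof -
  have "\<forall>f\<in>S. \<exists>e\<in>laurent_ring t. c f = p * e"
    using assms(3) unfolding A_dvd_def by blast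
  then obtain e where e: "\<And>f. f \<in> S \<Longrightarrow> e f \<in> laurent_ring t \<and> c f = p * e f"
    by (metis bchoice)
  have "(\<Sum>f\<in>S. c f * Mon f) = p * (\<Sum>f\<in>S. e f * Mon f)"
    by (simp add: sum_distrib_left mult.assoc e)
  moreover have "(\<Sum>f\<in>S. e f * Mon f) \<in> mon_span C"
    using assms(1,2) e by (intro mon_spanI) auto
  ultimately show ?thesis
    unfolding smul_set_def by blast
qed

lemma smul_mon_span_restrict:
  assumes C: "C \<subseteq> zvec N" and x: "x \<in> mon_span C" "x \<in> smul_set p (mon_span (zvec N))"
  shows "x \<in> smul_set p (mon_span C)"
proof -
  obtain S c where S: "finite S" "S \<subseteq> C" "\<And>f. f \<in> S \<Longrightarrow> c f \<in> laurent_ring t"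
    and x_eq: "x = (\<Sum>f\<in>S. c f * Mon f)"
    using x(1) by (blast elim: mon_spanE)
  have "A_dvd t p (c f)" if f: "f \<in> S" for f
  proof -
    have "A_dvd t p (\<Sum>i\<in>{i \<in> S. id i = f}. c i)"
      using S C x(2) x_eq by (intro fiber_sum_dvd_if_in_smul_span) auto
    moreover have "{i \<in> S. id i = f} = {f}"
      using f by auto
    ultimately show ?thesis by simp
  qed
  then show ?thesis
    unfolding x_eq by (rule sum_mon_in_smul_span[OF S(1,2)])
qed

lemma sum_mon_mult_binomial:
  assumes shape: "\<And>f. f \<in> zvec N \<Longrightarrow> Mon f * P = t powi \<alpha> f * Mon (f + a) + t powi \<beta> f * Mon (f + b)"
    and S: "S \<subseteq> zvec N"
  shows "(\<Sum>f\<in>S. c f * Mon f) * P =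
    (\<Sum>(f, e)\<in>S \<times> UNIV. (c f * t powi (if e then \<alpha> f else \<beta> f)) * Mon (if e then f + a else f + b))"
proof -
  have "(\<Sum>f\<in>S. c f * Mon f) * P =
      (\<Sum>f\<in>S. \<Sum>e\<in>UNIV. (c f * t powi (if e then \<alpha> f else \<beta> f)) * Mon (if e then f + a else f + b))"
    unfolding sum_distrib_right using shape S
    by (intro sum.cong refl) (auto simp: UNIV_bool mult.assoc distrib_left add.commute)
  then show ?thesis
    by (simp add: sum.cartesian_product)
qed

lemma coeffs_dvd_if_binomial_mult_dvd:
  assumes ab: "a \<in> zvec N" "b \<in> zvec N" "b i0 < a i0"
    and shape: "\<And>f. f \<in> zvec N \<Longrightarrow> Mon f * P = t powi \<alpha> f * Mon (f + a) + t powi \<beta> f * Mon (f + b)"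
    and S: "finite S" "S \<subseteq> zvec N" "\<And>f. f \<in> S \<Longrightarrow> c f \<in> laurent_ring t"
    and xP: "(\<Sum>f\<in>S. c f * Mon f) * P \<in> smul_set p (mon_span (zvec N))"
    and f: "f \<in> S"
  shows "A_dvd t p (c f)"
proof (rule ccontr)
  assume "\<not> A_dvd t p (c f)"
  define Bad where "Bad = {f \<in> S. \<not> A_dvd t p (c f)}"
  have Bad: "finite Bad" "Bad \<noteq> {}"
    using S(1) f \<open>\<not> A_dvd t p (c f)\<close> by (auto simp: Bad_def)
  obtain f1 where f1: "f1 \<in> Bad" and maximal: "\<And>f. f \<in> Bad \<Longrightarrow> f i0 \<le> f1 i0"
    using obtain_max_image[OF Bad, of "\<lambda>f. f i0"] by blast
  \<comment> \<open>The coefficient of \<open>Mon (f1 + a)\<close> in \<open>x * P\<close> is \<open>c f1\<close> times a unit plus terms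
    \<open>c f\<close> with \<open>f + b = f1 + a\<close>; such \<open>f\<close> exceed \<open>f1\<close> in coordinate \<open>i0\<close>, so \<open>p\<close> divides \<open>c f\<close>.\<close>
  define h where "h = (\<lambda>(f, e). if e then f + a else f + b)"
  define cc where "cc = (\<lambda>(f, e). c f * t powi (if e then \<alpha> f else \<beta> f))"
  let ?Z = "{z \<in> S \<times> UNIV. h z = f1 + a}"
  have "(\<Sum>f\<in>S. c f * Mon f) * P = (\<Sum>z\<in>S \<times> UNIV. cc z * Mon (h z))"
    using sum_mon_mult_binomial[OF shape S(2), of c] by (simp add: h_def cc_def case_prod_beta)
  with xP have "(\<Sum>z\<in>S \<times> UNIV. cc z * Mon (h z)) \<in> smul_set p (mon_span (zvec N))"
    by simp
  moreover have "h ` (S \<times> UNIV) \<subseteq> zvec N"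
    using S(2) ab(1,2) by (auto simp: h_def intro!: zvec_add)
  moreover have "cc z \<in> laurent_ring t" if "z \<in> S \<times> UNIV" for z
    using that S(3) by (auto simp: cc_def intro!: laurent_ring_mult[OF ct] powi_in_laurent_ring[OF ct])
  ultimately have fiber_dvd: "A_dvd t p (\<Sum>z\<in>?Z. cc z)"
    using S(1) by (intro fiber_sum_dvd_if_in_smul_span) auto
  have others_dvd: "A_dvd t p (cc z)" if z: "z \<in> ?Z - {(f1, True)}" for z
  proof -
    obtain f e where z_eq: "z = (f, e)" and fS: "f \<in> S" and hz: "h (f, e) = f1 + a"
      using z by auto
    have "\<not> e"
      using z hz z_eq by (auto simp: h_def)
    then have "(f + b) i0 = (f1 + a) i0"
      using hz by (simp add: h_def)
    then have "f \<notin> Bad"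
      using maximal[of f] ab(3) by auto
    then show ?thesis
      using fS \<open>\<not> e\<close> z_eq by (simp add: Bad_def cc_def A_dvd_mult_powi_iff[OF ct p])
  qed
  have "finite ?Z" "(f1, True) \<in> ?Z"
    using finite_subset[of ?Z "S \<times> UNIV"] S(1) f1 by (auto simp: Bad_def h_def)
  then have "A_dvd t p (cc (f1, True))"
    using fiber_dvd others_dvd by (rule A_dvd_sum_remove[OF ct p])
  then show False
    using f1 by (simp add: Bad_def cc_def A_dvd_mult_powi_iff[OF ct p])
qed

lemma binomial_mult_cancel:
  assumes ab: "a \<in> zvec N" "b \<in> zvec N" "a \<noteq> b"
    and x: "x \<in> mon_span (zvec N)"
    and xP: "x * (t powi i * Mon a + t powi j * Mon b) \<in> smul_set p (mon_span (zvec N))"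
  shows "x \<in> smul_set p (mon_span (zvec N))"
proof -
  let ?P = "t powi i * Mon a + t powi j * Mon b"
  obtain S c where S: "finite S" "S \<subseteq> zvec N" "\<And>f. f \<in> S \<Longrightarrow> c f \<in> laurent_ring t"
    and x_eq: "x = (\<Sum>f\<in>S. c f * Mon f)"
    using x by (blast elim: mon_spanE)
  define \<alpha> where "\<alpha> f = i + mon_exp f a" for f
  define \<beta> where "\<beta> f = j + mon_exp f b" for f
  have shape: "Mon f * ?P = t powi \<alpha> f * Mon (f + a) + t powi \<beta> f * Mon (f + b)"
    if "f \<in> zvec N" for f
    using mon_mult[OF that ab(1)] mon_mult[OF that ab(2)]
    by (simp add: distrib_left powi_t_left_commute[OF ct, of "Mon f"] \<alpha>_def \<beta>_def powi_t_add[OF ct] mult.assoc)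
  obtain i0 where "a i0 \<noteq> b i0"
    using ab(3) by (auto simp: fun_eq_iff)
  then consider "b i0 < a i0" | "a i0 < b i0" by linarith
  then have "A_dvd t p (c f)" if "f \<in> S" for f
  proof cases
    case 1
    show ?thesis
      by (rule coeffs_dvd_if_binomial_mult_dvd[OF ab(1,2) 1 shape S xP[unfolded x_eq] that])
  next
    case 2
    show ?thesis
      by (rule coeffs_dvd_if_binomial_mult_dvd[OF ab(2,1) 2 _ S xP[unfolded x_eq] that,
            where \<alpha> = \<beta> and \<beta> = \<alpha>])
        (simp add: shape add.commute)
  qed
  then show ?thesis
    unfolding x_eq by (rule sum_mon_in_smul_span[OF S(1,2)])
qed

lemma binomial_monoid_mult_cancel:
  assumes ab: "a \<in> zvec N" "b \<in> zvec N" "a \<noteq> b"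
    and C: "C \<subseteq> zvec N" and q: "q \<in> binomial_monoid t (Mon a) (Mon b)"
    and x: "x \<in> mon_span C" and xq: "x * q \<in> smul_set p (mon_span C)"
  shows "x \<in> smul_set p (mon_span C)"
proof -
  have "x \<in> smul_set p (mon_span (zvec N))"
    if "x \<in> mon_span (zvec N)" "x * q \<in> smul_set p (mon_span (zvec N))" for x
    using q that
  proof (induction arbitrary: x)
    case (binomial q i j)
    let ?P = "t powi i * Mon a + t powi j * Mon b"
    have "?P \<in> mon_span (zvec N)"
      using ab by (intro mon_span_add mon_span_scale powi_in_laurent_ring[OF ct] mon_span_mon)
    then have "x * ?P \<in> mon_span (zvec N)"
      using binomial.prems(1) by (intro mon_span_mult[OF subset_refl subset_refl]) (auto intro: zvec_add)
    moreover have "x * ?P * q \<in> smul_set p (mon_span (zvec N))"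
      using binomial.prems(2) by (simp add: mult.assoc)
    ultimately have "x * ?P \<in> smul_set p (mon_span (zvec N))"
      by (rule binomial.IH)
    then show ?case
      by (rule binomial_mult_cancel[OF ab binomial.prems(1)])
  qed simp
  moreover have "x \<in> mon_span (zvec N)" "x * q \<in> smul_set p (mon_span (zvec N))"
    using x xq mon_span_mono[OF C] unfolding smul_set_def by blast+
  ultimately show ?thesis
    using smul_mon_span_restrict[OF C x] by blast
qed

end

end

section \<open>Mutation in direction \<open>k\<close>\<close>

lemma bilin_add_left: "bilin N L (f + g) h = bilin N L f h + bilin N L g h"
  unfolding bilin_def by (simp add: algebra_simps sum.distrib)

lemma bilin_add_right: "bilin N L f (g + h) = bilin N L f g + bilin N L f h"
  unfolding bilin_def by (simp add: algebra_simps sum.distrib)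

lemma bilin_uminus_right: "bilin N L f (- g) = - bilin N L f g"
  unfolding bilin_def by (simp add: sum_negf)

lemma bilin_zero_left: "bilin N L 0 g = 0"
  unfolding bilin_def by simp

lemma bilin_skew:
  assumes "skew_sym N L"
  shows "bilin N L f g = - bilin N L g f"
proof -
  have "bilin N L g f = (\<Sum>i\<in>{1..N}. \<Sum>j\<in>{1..N}. g j * L j i * f i)"
    unfolding bilin_def by (rule sum.swap)
  also have "\<dots> = (\<Sum>i\<in>{1..N}. \<Sum>j\<in>{1..N}. - (f i * L i j * g j))"
  proof (intro sum.cong refl)
    fix i j assume "i \<in> {1..N}" "j \<in> {1..N}"
    then have "L j i = - L i j"
      using assms unfolding skew_sym_def by blast
    then show "g j * L j i * f i = - (f i * L i j * g j)"
      by (simp add: algebra_simps)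
  qed
  also have "\<dots> = - bilin N L f g"
    unfolding bilin_def by (simp add: sum_negf)
  finally show ?thesis by simp
qed

lemma bilin_self: "skew_sym N L \<Longrightarrow> bilin N L f f = 0"
  using bilin_skew[of N L f f] by simp

locale mutation_seed =
  fixes t :: "'f::division_ring" and N :: nat and ex inv :: "nat set"
    and M :: "(nat \<Rightarrow> int) \<Rightarrow> 'f" and B :: "nat \<Rightarrow> nat \<Rightarrow> int" and k :: nat
    and L :: "nat \<Rightarrow> nat \<Rightarrow> int" and d :: int
  assumes ct: "central_transcendental t"
    and ex_inv: "ex \<union> inv \<subseteq> {1..N}"
    and frame: "toric_frame t N M L"
    and d_pos: "0 < d"
    and compatible_k: "\<And>i. i \<in> {1..N} \<Longrightarrow> (\<Sum>l\<in>{1..N}. B l k * L l i) = (if i = k then d else 0)"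
    and k: "k \<in> ex"
begin

lemma skew: "skew_sym N L"
  using frame unfolding toric_frame_def by (elim conjE)

lemma M_zero: "M 0 = 1"
  using frame unfolding toric_frame_def by (elim conjE)

lemma M_mult: "f \<in> zvec N \<Longrightarrow> g \<in> zvec N \<Longrightarrow> M f * M g = t powi (bilin N L f g) * M (f + g)"
  using frame unfolding toric_frame_def by (elim conjE) simp

lemma M_indep:
  assumes "finite S" "S \<subseteq> zvec N" "\<forall>f\<in>S. c f \<in> laurent_ring t" "(\<Sum>f\<in>S. c f * M f) = 0"
  shows "\<forall>f\<in>S. c f = 0"
proof -
  have "\<forall>S c. finite S \<longrightarrow> S \<subseteq> zvec N \<longrightarrow> (\<forall>f\<in>S. c f \<in> laurent_ring t) \<longrightarrow>
      (\<Sum>f\<in>S. c f * M f) = 0 \<longrightarrow> (\<forall>f\<in>S. c f = 0)"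
    using frame unfolding toric_frame_def by (elim conjE)
  then show ?thesis
    using assms by blast
qed

sublocale frame: quasi_toric_frame t N M
  using ct M_zero M_mult M_indep by unfold_locales blast+

lemma k_N: "k \<in> {1..N}"
  using k ex_inv by auto

lemma M_inverse: "v \<in> zvec N \<Longrightarrow> inverse (M v) = M (- v)"
  using M_mult[of v "- v"] zvec_uminus[of v N] bilin_uminus_right[of N L v v] bilin_self[OF skew]
    M_zero by (intro inverse_unique) simp

lemma M_commute:
  assumes "f \<in> zvec N" "g \<in> zvec N"
  shows "M f * M g = t powi (bilin N L f g - bilin N L g f) * (M g * M f)"
  using M_mult[OF assms] M_mult[OF assms(2,1)]
  by (simp add: add.commute mult.assoc[symmetric] powi_t_add[OF ct, symmetric])

definition b_col :: "nat \<Rightarrow> int" where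
  "b_col = (\<lambda>i. if i \<in> {1..N} then B i k else 0)"

definition b_plus :: "nat \<Rightarrow> int" where
  "b_plus = bpos N B k"

definition b_minus :: "nat \<Rightarrow> int" where
  "b_minus = - bneg N B k"

lemma bilin_b_col: "bilin N L b_col g = d * g k"
proof -
  have "bilin N L b_col g = (\<Sum>j\<in>{1..N}. (\<Sum>i\<in>{1..N}. B i k * L i j) * g j)"
    unfolding bilin_def b_col_def by (subst sum.swap) (simp add: sum_distrib_right)
  also have "\<dots> = (\<Sum>j\<in>{1..N}. (if j = k then d * g k else 0))"
    using compatible_k by (intro sum.cong refl) simp
  also have "\<dots> = d * g k"
    using k_N by simp
  finally show ?thesis .
qed

lemma B_kk: "B k k = 0"
  using bilin_b_col[of b_col] bilin_self[OF skew, of b_col] d_pos k_N by (simp add: b_col_def)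

lemma b_plus_eq: "b_plus = b_minus + b_col"
  by (rule ext) (simp add: b_plus_def b_minus_def b_col_def bpos_def bneg_def max_def min_def)

lemma b_plus_k: "b_plus k = 0" and b_minus_k: "b_minus k = 0"
  using B_kk by (simp_all add: b_plus_def b_minus_def bpos_def bneg_def)

lemma b_plus_cone: "b_plus \<in> exponent_cone N (ex \<union> inv)"
  and b_minus_cone: "b_minus \<in> exponent_cone N (ex \<union> inv)"
  by (auto simp: exponent_cone_def zvec_def b_plus_def b_minus_def bpos_def bneg_def)

lemma b_plus_zvec: "b_plus \<in> zvec N" and b_minus_zvec: "b_minus \<in> zvec N"
  using b_plus_cone b_minus_cone exponent_cone_subset_zvec by blast+

lemma b_plus_ne_b_minus: "b_plus \<noteq> b_minus"
proof
  assume "b_plus = b_minus"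
  then have "b_col = 0"
    using b_plus_eq by (metis add_cancel_left_right)
  then show False
    using bilin_b_col[of "unitv k"] bilin_zero_left[of N L "unitv k"] d_pos by (simp add: unitv_def)
qed

abbreviation Y :: 'f where
  "Y \<equiv> mut_basis N M B k k"

definition P :: 'f where
  "P = t powi (bilin N L (unitv k) b_plus) * M b_plus + t powi (bilin N L (unitv k) b_minus) * M b_minus"

abbreviation Q :: "'f set" where
  "Q \<equiv> binomial_monoid t (M b_plus) (M b_minus)"

lemma unitv_k_zvec: "unitv k \<in> zvec N" and neg_unitv_k_zvec: "- unitv k \<in> zvec N"
  using zvec_unitv[OF k_N] zvec_uminus by blast+

lemma mut_basis_other: "i \<noteq> k \<Longrightarrow> mut_basis N M B k i = M (unitv i)"
  by (simp add: mut_basis_def)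

lemma Y_eq_sum: "Y = M (- unitv k + b_plus) + M (- unitv k + b_minus)"
  by (simp add: mut_basis_def b_plus_def b_minus_def)

lemma Y_eq: "Y = M (- unitv k) * P"
proof -
  have "M (- unitv k) * (t powi bilin N L (unitv k) v * M v) = M (- unitv k + v)" if "v \<in> zvec N" for v
  proof -
    have "bilin N L (- unitv k) v = - bilin N L (unitv k) v"
      using bilin_add_left[of N L "unitv k" "- unitv k" v] by (simp add: bilin_zero_left)
    then have "M (- unitv k) * M v = t powi (- bilin N L (unitv k) v) * M (- unitv k + v)"
      using M_mult[OF neg_unitv_k_zvec that] by simp
    then have "M (- unitv k) * (t powi bilin N L (unitv k) v * M v) =
        t powi bilin N L (unitv k) v * (t powi (- bilin N L (unitv k) v) * M (- unitv k + v))"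
      by (simp only: powi_t_left_commute[OF ct, of "M (- unitv k)"])
    then show ?thesis
      by (simp add: mult.assoc[symmetric] powi_t_add[OF ct, symmetric])
  qed
  then show ?thesis
    unfolding Y_eq_sum P_def distrib_left using b_plus_zvec b_minus_zvec by simp
qed

lemma P_nonzero: "P \<noteq> 0"
proof
  assume "P = 0"
  define c where
    "c v = t powi bilin N L (unitv k) (if v = b_plus then b_plus else b_minus)" for v
  have "(\<Sum>v\<in>{b_plus, b_minus}. c v * M v) = 0"
    using \<open>P = 0\<close> b_plus_ne_b_minus by (simp add: c_def P_def)
  then have "c b_plus = 0"
    using b_plus_zvec b_minus_zvec M_indep[of "{b_plus, b_minus}" c]
    by (auto simp: c_def powi_in_laurent_ring[OF ct])
  then show False
    using t_nonzero[OF ct] by (simp add: c_def)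
qed

lemma Y_nonzero: "Y \<noteq> 0"
  using Y_eq P_nonzero frame.mon_nonzero[OF neg_unitv_k_zvec] by simp

lemma inverse_Y: "inverse Y = inverse P * M (unitv k)"
  using Y_eq P_nonzero frame.mon_nonzero[OF neg_unitv_k_zvec] M_inverse[OF neg_unitv_k_zvec]
  by (simp add: nonzero_inverse_mult_distrib)

lemma M_Y_quasi_commute:
  assumes h: "h \<in> zvec N" "h k = 0"
  shows "M h * Y = t powi (bilin N L h (- unitv k + b_minus) - bilin N L (- unitv k + b_minus) h) * (Y * M h)"
proof -
  let ?u = "- unitv k + b_minus"
  have u_eq: "- unitv k + b_plus = b_col + ?u"
    by (simp add: b_plus_eq algebra_simps)
  have u: "?u \<in> zvec N" "b_col + ?u \<in> zvec N"
    using zvec_add[OF neg_unitv_k_zvec b_minus_zvec] zvec_add[OF neg_unitv_k_zvec b_plus_zvec]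
    unfolding u_eq by simp_all
  have same_exponent:
    "bilin N L h (b_col + ?u) - bilin N L (b_col + ?u) h = bilin N L h ?u - bilin N L ?u h"
    using bilin_b_col[of h] bilin_skew[OF skew, of h b_col] h(2)
    by (simp add: bilin_add_left bilin_add_right)
  have "M h * Y = M h * M (b_col + ?u) + M h * M ?u"
    by (simp only: Y_eq_sum u_eq distrib_left)
  also have "\<dots> = t powi (bilin N L h ?u - bilin N L ?u h) * (M (b_col + ?u) * M h + M ?u * M h)"
    unfolding M_commute[OF h(1) u(2)] M_commute[OF h(1) u(1)] same_exponent distrib_left ..
  also have "\<dots> = t powi (bilin N L h ?u - bilin N L ?u h) * (Y * M h)"
    by (simp only: Y_eq_sum u_eq distrib_right)
  finally show ?thesis .
qed

lemma M_b_plus_b_minus_commute: "M b_plus * M b_minus = M b_minus * M b_plus"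
proof -
  have "bilin N L b_plus b_minus = 0" "bilin N L b_minus b_plus = 0"
    using bilin_b_col[of b_minus] b_minus_k bilin_self[OF skew, of b_minus] bilin_skew[OF skew, of b_minus b_plus]
    by (simp_all add: b_plus_eq bilin_add_left)
  then show ?thesis
    using M_commute[OF b_plus_zvec b_minus_zvec] by simp
qed

lemma Q_commute: "q1 \<in> Q \<Longrightarrow> q2 \<in> Q \<Longrightarrow> q1 * q2 = q2 * q1"
  by (rule binomial_monoid_commute[OF ct M_b_plus_b_minus_commute])

lemma P_in_Q: "P \<in> Q"
  unfolding P_def using binomial_monoid.binomial[OF binomial_monoid.one] by simp

lemma normalizes_M: "g \<in> zvec N \<Longrightarrow> normalizes Q (M g)"
  using normalizes_binomial_monoid[OF ct M_commute M_commute] b_plus_zvec b_minus_zvec by blast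

lemma normalizes_Y: "normalizes Q Y"
  by (rule normalizes_binomial_monoid[OF ct M_Y_quasi_commute M_Y_quasi_commute])
    (simp_all add: b_plus_zvec b_minus_zvec b_plus_k b_minus_k)

(* Up to powers of t, mut_mon f is the value of the mutated toric frame \<mu>_k M at f. *)
definition mut_mon :: "(nat \<Rightarrow> int) \<Rightarrow> 'f" where
  "mut_mon f = M (f(k := 0)) * Y powi (f k)"

lemma zvec_upd: "f \<in> zvec N \<Longrightarrow> f(k := 0) \<in> zvec N"
  unfolding zvec_def by auto

lemma mut_mon_zero: "mut_mon 0 = 1"
  using M_zero by (simp add: mut_mon_def zero_fun_def fun_upd_def)

lemma Y_powi_quasi_commute:
  assumes h: "h \<in> zvec N" "h k = 0"
  obtains c where "\<And>n. Y powi n * M h = t powi (c * n) * (M h * Y powi n)"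
proof -
  obtain c where c: "Y * M h = t powi c * (M h * Y)"
    using powi_t_quasi_commute_sym[OF ct M_Y_quasi_commute[OF h]] by blast
  have "Y powi n * M h = t powi (c * n) * (M h * Y powi n)" for n
    using powi_quasi_commute[of "t powi c" Y "M h" n] powi_t_central[OF ct] c
    by (simp add: power_int_mult)
  then show ?thesis using that by blast
qed

lemma mut_mon_mult:
  assumes f: "f \<in> zvec N" and g: "g \<in> zvec N"
  shows "\<exists>e. mut_mon f * mut_mon g = t powi e * mut_mon (f + g)"
proof -
  let ?f = "f(k := 0)" and ?g = "g(k := 0)"
  obtain c where c: "\<And>n. Y powi n * M ?g = t powi (c * n) * (M ?g * Y powi n)"
    using Y_powi_quasi_commute[OF zvec_upd[OF g]] by auto
  have "mut_mon f * mut_mon g = M ?f * (Y powi (f k) * M ?g) * Y powi (g k)"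
    by (simp add: mut_mon_def mult.assoc)
  also have "\<dots> = t powi (c * f k) * (M ?f * M ?g) * (Y powi (f k) * Y powi (g k))"
    unfolding c by (simp only: powi_t_left_commute[OF ct, of "M ?f"] mult.assoc)
  also have "\<dots> = t powi (c * f k + bilin N L ?f ?g) * mut_mon (f + g)"
  proof -
    have "?f + ?g = (f + g)(k := 0)" by (simp add: fun_eq_iff)
    then show ?thesis
      using M_mult[OF zvec_upd[OF f] zvec_upd[OF g]] Y_nonzero
      by (simp add: mut_mon_def power_int_add powi_t_add[OF ct] mult.assoc)
  qed
  finally show ?thesis by blast
qed

lemma Y_pow_in_mon_span: "Y ^ n \<in> frame.mon_span {g \<in> zvec N. g k = - int n}"
proof (induction n)
  case 0
  then show ?case
    using frame.mon_span_laurent_ring[OF _ laurent_ring_one[OF ct]] zvec_zero by simp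
next
  case (Suc n)
  have "- unitv k + b_plus \<in> {g \<in> zvec N. g k = - 1}" "- unitv k + b_minus \<in> {g \<in> zvec N. g k = - 1}"
    using zvec_add[OF neg_unitv_k_zvec b_plus_zvec] zvec_add[OF neg_unitv_k_zvec b_minus_zvec] b_plus_k b_minus_k
    by (simp_all add: unitv_def)
  then have "Y \<in> frame.mon_span {g \<in> zvec N. g k = - 1}"
    unfolding Y_eq_sum by (intro frame.mon_span_add frame.mon_span_mon)
  then have "Y ^ n * Y \<in> frame.mon_span {g \<in> zvec N. g k = - int (Suc n)}"
    using Suc.IH by (intro frame.mon_span_mult) (auto intro: zvec_add)
  then show ?case
    by (simp only: power_Suc2)
qed

lemma mut_mon_indep:
  assumes S: "finite S" "S \<subseteq> zvec N" "\<forall>f\<in>S. c f \<in> laurent_ring t"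
    and sum: "(\<Sum>f\<in>S. c f * mut_mon f) = 0"
  shows "\<forall>f\<in>S. c f = 0"
proof
  fix f0 assume f0: "f0 \<in> S"
  \<comment> \<open>After right multiplication by \<open>Y powi m\<close> only nonnegative powers of \<open>Y\<close> occur; as \<open>Y\<close> is a
    combination of \<open>M\<close>-monomials with \<open>k\<close>-th exponent \<open>-1\<close>, the sum is graded by that exponent.\<close>
  define m where "m = (\<Sum>f\<in>S. \<bar>f k\<bar>)"
  define n where "n f = f k + m" for f
  have n_nonneg: "0 \<le> n f" if "f \<in> S" for f
    using member_le_sum[OF that, of "\<lambda>f. \<bar>f k\<bar>"] S(1) by (simp add: n_def m_def)
  define part where "part j = (\<Sum>f\<in>{f \<in> S. n f = j}. c f * M (f(k := 0)))" for j
  have "(\<Sum>f\<in>S. c f * mut_mon f) * Y powi m = (\<Sum>f\<in>S. c f * M (f(k := 0)) * Y powi (n f))"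
    using Y_nonzero by (simp add: sum_distrib_right mut_mon_def n_def power_int_add mult.assoc)
  also have "\<dots> = (\<Sum>j\<in>n ` S. \<Sum>f\<in>{f \<in> S. n f = j}. c f * M (f(k := 0)) * Y powi (n f))"
    by (rule sum.image_gen[OF S(1)])
  also have "\<dots> = (\<Sum>j\<in>n ` S. part j * Y powi j)"
    unfolding part_def sum_distrib_right by (intro sum.cong refl) simp
  finally have graded: "(\<Sum>j\<in>n ` S. part j * Y powi j) = 0"
    using sum by simp
  have "part j * Y powi j \<in> frame.mon_span {g \<in> zvec N. g k = - j}" if "j \<in> n ` S" for j
  proof (rule frame.mon_span_mult)
    show "part j \<in> frame.mon_span {g \<in> zvec N. g k = 0}"
      unfolding part_def using S by (intro frame.sum_mon_in_mon_span) (auto intro: zvec_upd)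
    show "Y powi j \<in> frame.mon_span {g \<in> zvec N. g k = - j}"
      using Y_pow_in_mon_span[of "nat j"] n_nonneg that by (auto simp: power_int_def)
  qed (auto intro: zvec_add)
  then have "part (n f0) * Y powi (n f0) = 0"
    using f0 S(1) graded by (intro frame.mon_span_graded_sum_eq_0[where D = "\<lambda>j. {g \<in> zvec N. g k = - j}"]) auto
  then have "part (n f0) = 0"
    using Y_nonzero by simp
  then have "(\<Sum>f\<in>{f' \<in> {f \<in> S. n f = n f0}. f'(k := 0) = f0(k := 0)}. c f) = 0"
    unfolding part_def using S by (intro frame.fiber_sum_eq_0) (auto intro: zvec_upd)
  moreover have "{f' \<in> {f \<in> S. n f = n f0}. f'(k := 0) = f0(k := 0)} = {f0}"
    using f0 by (auto simp: n_def fun_eq_iff)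
  ultimately show "c f0 = 0" by simp
qed

sublocale mutated: quasi_toric_frame t N mut_mon
  using ct mut_mon_zero mut_mon_mult mut_mon_indep by unfold_locales blast+

lemma mut_mon_unitv: "mut_mon (unitv i) = mut_basis N M B k i"
proof (cases "i = k")
  case True
  have "(unitv k)(k := 0) = 0" "unitv k k = 1"
    by (simp_all add: unitv_def fun_eq_iff)
  then show ?thesis
    using True M_zero by (simp add: mut_mon_def)
next
  case False
  then have "(unitv i)(k := 0) = unitv i" "unitv i k = 0"
    by (simp_all add: unitv_def fun_eq_iff)
  then show ?thesis
    using False by (simp add: mut_mon_def mut_basis_def)
qed

lemma mut_mon_neg_unitv: "i \<in> {1..N} \<Longrightarrow> mut_mon (- unitv i) = inverse (mut_basis N M B k i)"
proof (cases "i = k")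
  case True
  have "(- unitv k)(k := 0) = 0" "(- unitv k) k = - 1"
    by (simp_all add: unitv_def fun_eq_iff)
  then show ?thesis
    using True M_zero by (simp add: mut_mon_def power_int_minus)
next
  case False
  assume "i \<in> {1..N}"
  moreover have "(- unitv i)(k := 0) = - unitv i" "(- unitv i) k = 0"
    using False by (simp_all add: unitv_def fun_eq_iff)
  ultimately show ?thesis
    using False M_inverse[OF zvec_unitv] by (simp add: mut_mon_def mut_basis_def)
qed

lemma mut_mon_b_plus: "mut_mon b_plus = M b_plus" and mut_mon_b_minus: "mut_mon b_minus = M b_minus"
  using b_plus_k b_minus_k by (simp_all add: mut_mon_def fun_upd_idem)

abbreviation T :: "'f set" where
  "T \<equiv> Tge t N ex inv (\<lambda>j. M (unitv j))"

abbreviation T_mut :: "'f set" where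
  "T_mut \<equiv> Tge t N ex inv (mut_basis N M B k)"

lemma T_eq_mon_span: "T = frame.mon_span (exponent_cone N (ex \<union> inv))"
  using ex_inv M_inverse[OF zvec_unitv] by (intro frame.Tge_eq_mon_span) auto

lemma T_mut_eq_mon_span: "T_mut = mutated.mon_span (exponent_cone N (ex \<union> inv))"
  using ex_inv mut_mon_unitv mut_mon_neg_unitv by (intro mutated.Tge_eq_mon_span) auto

lemma Q_subset_T: "Q \<subseteq> T"
  using b_plus_cone b_minus_cone
  by (intro binomial_monoid_subset_Tge[OF ct]) (auto simp: T_eq_mon_span intro: frame.mon_span_mon)

lemma Q_subset_T_mut: "Q \<subseteq> T_mut"
proof (rule binomial_monoid_subset_Tge[OF ct])
  show "M b_plus \<in> T_mut" "M b_minus \<in> T_mut"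
    using mutated.mon_span_mon[OF b_plus_cone] mutated.mon_span_mon[OF b_minus_cone]
    unfolding T_mut_eq_mon_span mut_mon_b_plus mut_mon_b_minus .
qed

lemma T_cancel:
  assumes "p \<in> laurent_ring t" "x \<in> T" "q \<in> Q" "x * q \<in> smul_set p T"
  shows "x \<in> smul_set p T"
  using assms frame.binomial_monoid_mult_cancel[OF _ b_plus_zvec b_minus_zvec b_plus_ne_b_minus
      exponent_cone_subset_zvec]
  unfolding T_eq_mon_span by blast

lemma T_mut_cancel:
  assumes "p \<in> laurent_ring t" "x \<in> T_mut" "q \<in> Q" "x * q \<in> smul_set p T_mut"
  shows "x \<in> smul_set p T_mut"
  using assms mutated.binomial_monoid_mult_cancel[OF _ b_plus_zvec b_minus_zvec b_plus_ne_b_minus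
      exponent_cone_subset_zvec]
  unfolding T_mut_eq_mon_span mut_mon_b_plus mut_mon_b_minus by blast

lemma T_Ore: "z \<in> T \<Longrightarrow> right_Ore_element Q T z"
  using Q_commute binomial_monoid_mult Q_subset_T ex_inv normalizes_M[OF zvec_unitv]
  by (rule Tge_right_Ore[OF ct])

lemma T_mut_Ore: "z \<in> T_mut \<Longrightarrow> right_Ore_element Q T_mut z"
proof (rule Tge_right_Ore[OF ct Q_commute binomial_monoid_mult Q_subset_T_mut ex_inv])
  show "normalizes Q (mut_basis N M B k i)" if "i \<in> {1..N}" for i
    using normalizes_Y normalizes_M[OF zvec_unitv[OF that]] by (simp add: mut_basis_def)
qed

lemma trivial_fraction: "x \<in> S \<Longrightarrow> \<exists>q\<in>Q. x * q \<in> S"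
  using binomial_monoid.one by force

lemma Y_in_T: "Y \<in> T"
proof -
  have "inverse (M (unitv k)) \<in> T"
    using k by (intro Tge.geninv) auto
  then show ?thesis
    unfolding Y_eq M_inverse[OF unitv_k_zvec] using Q_subset_T P_in_Q by (blast intro: Tge.mult)
qed

lemma inverse_Y_fraction_in_T: "\<exists>q\<in>Q. inverse Y * q \<in> T"
proof -
  obtain q where q: "q \<in> Q" "M (unitv k) * q = P * M (unitv k)"
    using normalizes_M[OF unitv_k_zvec] P_in_Q unfolding normalizes_def by blast
  have "inverse Y * q = M (unitv k)"
    using P_nonzero by (simp add: inverse_Y mult.assoc q(2)) (simp add: mult.assoc[symmetric])
  then show ?thesis
    using q(1) Tge.gen[OF k_N] by metis
qed

lemma M_unitv_k_in_T_mut: "M (unitv k) \<in> T_mut"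
proof -
  have "inverse Y \<in> T_mut"
    using k by (intro Tge.geninv) auto
  then have "P * inverse Y \<in> T_mut"
    using Q_subset_T_mut P_in_Q by (blast intro: Tge.mult)
  moreover have "M (unitv k) = P * inverse Y"
    using P_nonzero by (simp add: inverse_Y mult.assoc[symmetric])
  ultimately show ?thesis
    by simp
qed

lemma inverse_M_unitv_k_fraction_in_T_mut: "\<exists>q\<in>Q. inverse (M (unitv k)) * q \<in> T_mut"
proof -
  have "inverse (M (unitv k)) * P = Y"
    using Y_eq M_inverse[OF unitv_k_zvec] by simp
  then show ?thesis
    using P_in_Q Tge.gen[OF k_N] by metis
qed

lemma T_mut_right_fractions: "y \<in> T_mut \<Longrightarrow> \<exists>q\<in>Q. y * q \<in> T"
proof (rule Tge_right_fractions[OF ct binomial_monoid.one Q_commute binomial_monoid_mult Q_subset_T T_Ore])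
  show "\<exists>q\<in>Q. mut_basis N M B k i * q \<in> T" if i: "i \<in> {1..N}" for i
  proof -
    have "M (unitv i) \<in> T"
      using i by (rule Tge.gen)
    then show ?thesis
      using Y_in_T by (intro trivial_fraction) (cases "i = k", simp_all add: mut_basis_other)
  qed
  show "\<exists>q\<in>Q. inverse (mut_basis N M B k j) * q \<in> T" if j: "j \<in> ex \<union> inv" for j
  proof -
    have "inverse (M (unitv j)) \<in> T"
      using j by (rule Tge.geninv)
    then show ?thesis
      using inverse_Y_fraction_in_T by (cases "j = k") (auto intro: trivial_fraction simp: mut_basis_other)
  qed
qed

lemma T_right_fractions: "y \<in> T \<Longrightarrow> \<exists>q\<in>Q. y * q \<in> T_mut"
proof (rule Tge_right_fractions[OF ct binomial_monoid.one Q_commute binomial_monoid_mult Q_subset_T_mut T_mut_Ore])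
  show "\<exists>q\<in>Q. M (unitv i) * q \<in> T_mut" if i: "i \<in> {1..N}" for i
  proof -
    have "mut_basis N M B k i \<in> T_mut"
      using i by (rule Tge.gen)
    then show ?thesis
      using M_unitv_k_in_T_mut by (intro trivial_fraction) (cases "i = k", simp_all add: mut_basis_other)
  qed
  show "\<exists>q\<in>Q. inverse (M (unitv j)) * q \<in> T_mut" if j: "j \<in> ex \<union> inv" for j
  proof -
    have "inverse (mut_basis N M B k j) \<in> T_mut"
      using j by (rule Tge.geninv)
    then show ?thesis
      using inverse_M_unitv_k_fraction_in_T_mut
      by (cases "j = k") (auto intro: trivial_fraction simp: mut_basis_other)
  qed
qed

theorem inter_smul_set_eq:
  assumes "p \<in> laurent_ring t"
  shows "T \<inter> smul_set p T_mut = smul_set p T \<inter> T_mut"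
proof -
  have "T \<inter> smul_set p T_mut \<subseteq> smul_set p T \<inter> T_mut"
    by (rule inter_smul_set_subset[OF T_mut_right_fractions T_cancel[OF assms] Tge.scalar[OF assms] Tge.mult])
  moreover have "T_mut \<inter> smul_set p T \<subseteq> smul_set p T_mut \<inter> T"
    by (rule inter_smul_set_subset[OF T_right_fractions T_mut_cancel[OF assms] Tge.scalar[OF assms] Tge.mult])
  ultimately show ?thesis
    by blast
qed

end

theorem proposition5p10:
  fixes t :: "'f::division_ring" and N :: nat and ex inv :: "nat set"
    and M :: "(nat \<Rightarrow> int) \<Rightarrow> 'f" and B :: "nat \<Rightarrow> nat \<Rightarrow> int" and p :: 'f and k :: nat
  assumes "central_transcendental t"
    and "ex \<subseteq> {1..N}"
    and "inv \<subseteq> {1..N} - ex"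
    and "quantum_seed t N ex M B"
    and "A_prime t p"
    and "k \<in> ex"
  shows "Tge t N ex inv (\<lambda>j. M (unitv j)) \<inter> smul_set p (Tge t N ex inv (mut_basis N M B k))
       = smul_set p (Tge t N ex inv (\<lambda>j. M (unitv j))) \<inter> Tge t N ex inv (mut_basis N M B k)"
proof -
  obtain L where frame: "toric_frame t N M L" and "compatible N ex L B"
    using assms(4) unfolding quantum_seed_def by blast
  then obtain d where d: "\<forall>j\<in>ex. 0 < d j"
      "\<forall>i\<in>{1..N}. \<forall>j\<in>ex. (\<Sum>l\<in>{1..N}. B l j * L l i) = (if i = j then d j else 0)"
    unfolding compatible_def by blast
  interpret mutation_seed t N ex inv M B k L "d k"
    using assms(1-3,6) frame d by unfold_locales auto
  have "p \<in> laurent_ring t"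
    using assms(5) unfolding A_prime_def by blast
  then show ?thesis
    by (rule inter_smul_set_eq)
qed

end
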